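(* For each $p$, let $a_{p,1}\ge a_{p,2}\ge\dots\ge a_{p,p}\ge0$ and $b_{p,1}\ge\dots\ge b_{p,p}\ge0$ be real numbers with $\sum_{j=1}^pa_{p,j}^2=\sum_{j=1}^pb_{p,j}^2=1$, and assume $\max_{j\le p}|a_{p,j}-b_{p,j}|\to0$ as $p\to\infty$. Let $\eta_j$ be i.i.d. $\chi^2_1$ random variables, $\eta'_j=\eta_j-1$, $V_a=\sum_{j=1}^pa_{p,j}\eta'_j$ and $V_b=\sum_{j=1}^pb_{p,j}\eta'_j$. Then $$\sup_{x\in\mathbb{R}}|\mathbb{P}(V_a\le x)-\mathbb{P}(V_b\le x)|\to0\quad\text{as }p\to\infty.$$ *)

theory Defs
  imports "HOL-Probability.Probability"
begin

definition chi2_1_density :: "real \<Rightarrow> ennreal" where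
  "chi2_1_density x = (if x > 0 then ennreal (exp (- x / 2) / sqrt (2 * pi * x)) else 0)"

end

theory Submission
  imports Defs
begin

(* Every subsequence has a further subsequence along which the largest weight a_{p,1}
   converges, say to alpha.  If alpha = 0, comparing characteristic functions factor by factor
   with Gaussian ones shows that V_a and V_b both converge in law to the same centred normal
   distribution.  If alpha > 0, both families are tight (their variances are fixed), so along a
   further subsequence they converge weakly.  Their characteristic functions are products of
   the characteristic function of eta'_1 at the points a_{p,j} t and b_{p,j} t: the first K
   factors agree up to O(K max_j |a_{p,j} - b_{p,j}|), and the remaining factors, whose weights
   are at most 1/sqrt(K+1), are close to Gaussian factors with almost equal variances.  Hence
   the two limits coincide.  The limit has no atoms, since V_a contains the independent summand
   a_{p,1} eta'_1 with a_{p,1} >= alpha/2, which puts uniformly small mass on short intervals.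
   In both cases Polya's theorem upgrades weak convergence to an atomless limit into uniform
   convergence of the distribution functions. *)

lemma abs_exp_minus_sub_linear_le:
  fixes x :: real
  assumes "0 \<le> x"
  shows "\<bar>exp (- x) - (1 - x)\<bar> \<le> x\<^sup>2 / 2"
proof -
  define f where "f y = 1 - y + y\<^sup>2 / 2 - exp (- y)" for y :: real
  have "f 0 \<le> f x"
  proof (rule DERIV_nonneg_imp_nondecreasing[OF assms])
    fix y :: real
    have "(f has_real_derivative (- 1 + y + exp (- y))) (at y)"
      unfolding f_def by (auto intro!: derivative_eq_intros simp: power2_eq_square)
    then show "\<exists>y'. (f has_real_derivative y') (at y) \<and> 0 \<le> y'"
      using exp_ge_add_one_self[of "- y"] by auto
  qed
  then show ?thesis
    using exp_ge_add_one_self[of "- x"] by (simp add: f_def)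
qed

lemma abs_exp_minus_diff_le:
  fixes u v :: real
  assumes "0 \<le> u" "0 \<le> v"
  shows "\<bar>exp (- u) - exp (- v)\<bar> \<le> \<bar>u - v\<bar>"
proof -
  have "exp (- u) - exp (- v) \<le> v - u" if "0 \<le> u" "u \<le> v" for u v :: real
  proof -
    have "exp (- u) - exp (- v) = exp (- u) * (1 - exp (- (v - u)))"
      by (simp add: algebra_simps flip: exp_add)
    also have "\<dots> \<le> 1 - exp (- (v - u))"
      using that by (intro mult_left_le_one_le) auto
    also have "\<dots> \<le> v - u"
      using exp_ge_add_one_self[of "- (v - u)"] by linarith
    finally show ?thesis .
  qed
  from this[of u v] this[of v u] assms show ?thesis
    by (cases "u \<le> v") auto
qed

lemma abs_power_le_1_plus_abs_power:
  fixes x :: real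
  assumes "k \<le> n"
  shows "\<bar>x\<bar> ^ k \<le> 1 + \<bar>x\<bar> ^ n"
proof (cases "\<bar>x\<bar> \<le> 1")
  case True
  then have "\<bar>x\<bar> ^ k \<le> 1" by (simp add: power_le_one)
  moreover have "0 \<le> \<bar>x\<bar> ^ n" by simp
  ultimately show ?thesis by linarith
next
  case False
  then have "\<bar>x\<bar> ^ k \<le> \<bar>x\<bar> ^ n" using assms by (intro power_increasing) auto
  then show ?thesis by simp
qed

lemma norm_mult_diff_le:
  fixes x y x' y' :: "'a::real_normed_algebra"
  assumes "norm y \<le> 1" "norm x' \<le> 1"
  shows "norm (x * y - x' * y') \<le> norm (x - x') + norm (y - y')"
proof -
  have "norm (x * y - x' * y') = norm ((x - x') * y + x' * (y - y'))"
    by (simp add: algebra_simps)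
  also have "\<dots> \<le> norm (x - x') * norm y + norm x' * norm (y - y')"
    by (intro order_trans[OF norm_triangle_ineq] add_mono norm_mult_ineq)
  also have "\<dots> \<le> norm (x - x') + norm (y - y')"
    using assms by (intro add_mono mult_left_le mult_left_le_one_le norm_ge_zero)
  finally show ?thesis .
qed

lemma subsubsequences_tendsto_imp_tendsto:
  fixes D :: "nat \<Rightarrow> 'a::metric_space"
  assumes "\<And>s :: nat \<Rightarrow> nat. strict_mono s \<Longrightarrow> \<exists>r :: nat \<Rightarrow> nat. strict_mono r \<and> (\<lambda>n. D (s (r n))) \<longlonglongrightarrow> l"
  shows "D \<longlonglongrightarrow> l"
proof (rule ccontr)
  assume "\<not> D \<longlonglongrightarrow> l"
  then obtain \<epsilon> where "\<epsilon> > 0" and "\<not> eventually (\<lambda>n. dist (D n) l < \<epsilon>) sequentially"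
    unfolding tendsto_iff by blast
  then have "frequently (\<lambda>n. \<not> dist (D n) l < \<epsilon>) cofinite"
    unfolding cofinite_eq_sequentially frequently_def by simp
  then have "infinite {n. \<not> dist (D n) l < \<epsilon>}"
    unfolding frequently_cofinite .
  from infinite_enumerate[OF this]
  obtain s :: "nat \<Rightarrow> nat" where s_mono: "strict_mono s" and "\<forall>n. s n \<in> {n. \<not> dist (D n) l < \<epsilon>}"
    by blast
  then have s: "\<And>n. \<not> dist (D (s n)) l < \<epsilon>"
    by simp
  obtain r where "(\<lambda>n. D (s (r n))) \<longlonglongrightarrow> l"
    using assms[OF s_mono] by blast
  then have "eventually (\<lambda>n. dist (D (s (r n))) l < \<epsilon>) sequentially"
    using \<open>\<epsilon> > 0\<close> by (auto simp: tendsto_iff)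
  then obtain n where "dist (D (s (r n))) l < \<epsilon>"
    by (meson eventually_sequentially order_refl)
  with s show False by blast
qed

lemma exists_between_not_in_countable:
  fixes a b :: real
  assumes "countable A" "a < b"
  obtains y where "a < y" "y < b" "y \<notin> A"
proof -
  have "\<not> {a<..<b} \<subseteq> A"
    using countable_subset[OF _ assms(1)] uncountable_open_interval[of a b] assms(2) by auto
  then obtain y where "y \<in> {a<..<b}" "y \<notin> A" by blast
  then show ?thesis using that by auto
qed

section \<open>Decreasing unit weight vectors\<close>

definition decreasing_unit_weights :: "nat \<Rightarrow> (nat \<Rightarrow> real) \<Rightarrow> bool" where
  "decreasing_unit_weights p c \<longleftrightarrow>
     (\<forall>j. 1 \<le> j \<longrightarrow> j < p \<longrightarrow> c (Suc j) \<le> c j) \<and> 0 \<le> c p \<and> (\<Sum>j=1..p. (c j)\<^sup>2) = 1"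

context
  fixes p :: nat and c :: "nat \<Rightarrow> real"
  assumes c: "decreasing_unit_weights p c"
begin

lemma decreasing_unit_weights_sum_sq: "(\<Sum>j=1..p. (c j)\<^sup>2) = 1"
  using c by (simp add: decreasing_unit_weights_def)

lemma decreasing_unit_weights_ge_1: "1 \<le> p"
  using decreasing_unit_weights_sum_sq by (cases p) auto

lemma decreasing_unit_weights_antimono:
  assumes "1 \<le> i" "i \<le> j" "j \<le> p"
  shows "c j \<le> c i"
  using assms(2,3)
proof (induction j rule: dec_induct)
  case (step k)
  then have "c (Suc k) \<le> c k"
    using c assms(1) by (simp add: decreasing_unit_weights_def)
  with step show ?case by linarith
qed simp

lemma decreasing_unit_weights_nonneg:
  assumes "j \<in> {1..p}"
  shows "0 \<le> c j"
  using decreasing_unit_weights_antimono[of j p] assms c by (auto simp: decreasing_unit_weights_def)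

lemma decreasing_unit_weights_le_inverse_sqrt:
  assumes "K + 1 \<le> j" "j \<le> p"
  shows "c j \<le> 1 / sqrt (real K + 1)"
proof -
  have cj: "0 \<le> c j" using decreasing_unit_weights_nonneg assms by auto
  have "(\<Sum>i=1..K+1. (c j)\<^sup>2) \<le> (\<Sum>i=1..K+1. (c i)\<^sup>2)"
    using assms cj by (intro sum_mono power_mono decreasing_unit_weights_antimono) auto
  also have "\<dots> \<le> (\<Sum>i=1..p. (c i)\<^sup>2)"
    using assms by (intro sum_mono2) auto
  finally have "(real K + 1) * (c j)\<^sup>2 \<le> 1"
    using decreasing_unit_weights_sum_sq by (simp add: add.commute)
  then have "(c j)\<^sup>2 \<le> 1 / (real K + 1)"
    by (simp add: field_simps)
  then have "sqrt ((c j)\<^sup>2) \<le> sqrt (1 / (real K + 1))"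
    by (rule real_sqrt_le_mono)
  then show ?thesis
    using cj by (simp add: real_sqrt_divide)
qed

lemma decreasing_unit_weights_le_1:
  assumes "j \<in> {1..p}"
  shows "c j \<le> 1"
  using decreasing_unit_weights_le_inverse_sqrt[of 0 j] assms by auto

lemma decreasing_unit_weights_tail_sum_sq:
  assumes "K \<le> p"
  shows "(\<Sum>j=K+1..p. (c j)\<^sup>2) = 1 - (\<Sum>j=1..K. (c j)\<^sup>2)"
proof -
  have "{1..p} = {1..K} \<union> {K+1..p}" "{1..K} \<inter> {K+1..p} = {}"
    using assms by auto
  then show ?thesis
    using decreasing_unit_weights_sum_sq sum.union_disjoint[of "{1..K}" "{K+1..p}" "\<lambda>j. (c j)\<^sup>2"]
    by simp
qed

lemma decreasing_unit_weights_tail_sum_sq_le_1: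
  assumes "K \<le> p"
  shows "(\<Sum>j=K+1..p. (c j)\<^sup>2) \<le> 1"
  using decreasing_unit_weights_tail_sum_sq[OF assms] sum_nonneg[of "{1..K}" "\<lambda>j. (c j)\<^sup>2"] by simp

end

lemma decreasing_unit_weights_tail_sum_sq_diff_le:
  assumes a: "decreasing_unit_weights p a" and b: "decreasing_unit_weights p b"
    and K: "K \<le> p" and \<delta>: "\<And>j. j \<in> {1..p} \<Longrightarrow> \<bar>a j - b j\<bar> \<le> \<delta>"
  shows "\<bar>(\<Sum>j=K+1..p. (a j)\<^sup>2) - (\<Sum>j=K+1..p. (b j)\<^sup>2)\<bar> \<le> 2 * real K * \<delta>"
proof -
  have "\<bar>(\<Sum>j=K+1..p. (a j)\<^sup>2) - (\<Sum>j=K+1..p. (b j)\<^sup>2)\<bar> = \<bar>\<Sum>j=1..K. (b j)\<^sup>2 - (a j)\<^sup>2\<bar>"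
    unfolding decreasing_unit_weights_tail_sum_sq[OF a K] decreasing_unit_weights_tail_sum_sq[OF b K]
    by (simp add: sum_subtractf)
  also have "\<dots> \<le> (\<Sum>j=1..K. \<bar>(b j)\<^sup>2 - (a j)\<^sup>2\<bar>)"
    by (rule sum_abs)
  also have "\<dots> \<le> (\<Sum>j=1..K. \<delta> * 2)"
  proof (rule sum_mono)
    fix j assume "j \<in> {1..K}"
    then have j: "j \<in> {1..p}" using K by auto
    have "\<bar>(b j)\<^sup>2 - (a j)\<^sup>2\<bar> = \<bar>a j - b j\<bar> * \<bar>a j + b j\<bar>"
      by (simp add: power2_eq_square abs_mult[symmetric] algebra_simps)
    also have "\<dots> \<le> \<delta> * 2"
      using \<delta>[OF j] decreasing_unit_weights_nonneg[OF a j] decreasing_unit_weights_nonneg[OF b j]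
        decreasing_unit_weights_le_1[OF a j] decreasing_unit_weights_le_1[OF b j]
      by (intro mult_mono) auto
    finally show "\<bar>(b j)\<^sup>2 - (a j)\<^sup>2\<bar> \<le> \<delta> * 2" .
  qed
  finally show ?thesis by simp
qed

section \<open>Products of second-order characteristic functions\<close>

locale second_order_char =
  fixes \<psi> :: "real \<Rightarrow> complex" and \<sigma> C L :: real
  assumes norm_le_1: "norm (\<psi> s) \<le> 1"
    and second_order: "norm (\<psi> s - complex_of_real (1 - s\<^sup>2 * \<sigma> / 2)) \<le> C * \<bar>s\<bar> ^ 3"
    and lipschitz: "norm (\<psi> s - \<psi> s') \<le> L * \<bar>s - s'\<bar>"
    and variance_nonneg: "0 \<le> \<sigma>"
begin

lemma C_nonneg: "0 \<le> C"
  using order_trans[OF norm_ge_zero second_order[of 1]] by simp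

lemma L_nonneg: "0 \<le> L"
  using order_trans[OF norm_ge_zero lipschitz[of 1 0]] by simp

lemma norm_sub_gaussian_factor_le:
  assumes c: "0 \<le> c" "c \<le> m"
  shows "norm (\<psi> (c * t) - complex_of_real (exp (- (\<sigma> * t\<^sup>2 * c\<^sup>2) / 2)))
     \<le> (C * \<bar>t\<bar> ^ 3 * m + \<sigma>\<^sup>2 * t ^ 4 * m\<^sup>2 / 8) * c\<^sup>2"
proof -
  define x where "x = \<sigma> * t\<^sup>2 * c\<^sup>2 / 2"
  have "\<psi> (c * t) - complex_of_real (exp (- (\<sigma> * t\<^sup>2 * c\<^sup>2) / 2))
      = (\<psi> (c * t) - complex_of_real (1 - (c * t)\<^sup>2 * \<sigma> / 2)) + complex_of_real ((1 - x) - exp (- x))"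
    by (simp add: x_def algebra_simps)
  then have "norm (\<psi> (c * t) - complex_of_real (exp (- (\<sigma> * t\<^sup>2 * c\<^sup>2) / 2)))
      \<le> norm (\<psi> (c * t) - complex_of_real (1 - (c * t)\<^sup>2 * \<sigma> / 2)) + \<bar>(1 - x) - exp (- x)\<bar>"
    by (metis norm_of_real norm_triangle_ineq)
  also have "\<dots> \<le> C * \<bar>c * t\<bar> ^ 3 + x\<^sup>2 / 2"
    using abs_exp_minus_sub_linear_le[of x] variance_nonneg
    by (intro add_mono second_order) (simp_all add: x_def abs_minus_commute)
  also have "C * \<bar>c * t\<bar> ^ 3 \<le> C * \<bar>t\<bar> ^ 3 * m * c\<^sup>2"
  proof -
    have "\<bar>c * t\<bar> ^ 3 = \<bar>t\<bar> ^ 3 * (c * c\<^sup>2)"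
      using c by (simp add: abs_mult power3_eq_cube power2_eq_square)
    also have "\<dots> \<le> \<bar>t\<bar> ^ 3 * (m * c\<^sup>2)"
      using c by (intro mult_left_mono mult_right_mono) auto
    finally show ?thesis
      using C_nonneg by (simp add: mult_left_mono mult.assoc)
  qed
  also have "x\<^sup>2 / 2 \<le> \<sigma>\<^sup>2 * t ^ 4 * m\<^sup>2 / 8 * c\<^sup>2"
  proof -
    have "x\<^sup>2 / 2 = \<sigma>\<^sup>2 * t ^ 4 / 8 * (c\<^sup>2 * c\<^sup>2)"
      by (simp add: x_def field_simps power2_eq_square power4_eq_xxxx)
    also have "\<dots> \<le> \<sigma>\<^sup>2 * t ^ 4 / 8 * (m\<^sup>2 * c\<^sup>2)"
      using c by (intro mult_left_mono mult_right_mono power_mono) auto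
    finally show ?thesis by simp
  qed
  finally show ?thesis
    by (simp add: algebra_simps)
qed

lemma norm_prod_sub_gaussian_le:
  assumes c: "\<And>j. j \<in> J \<Longrightarrow> 0 \<le> c j \<and> c j \<le> m"
  shows "norm ((\<Prod>j\<in>J. \<psi> (c j * t)) - complex_of_real (exp (- (\<sigma> * t\<^sup>2 * (\<Sum>j\<in>J. (c j)\<^sup>2)) / 2)))
     \<le> (C * \<bar>t\<bar> ^ 3 * m + \<sigma>\<^sup>2 * t ^ 4 * m\<^sup>2 / 8) * (\<Sum>j\<in>J. (c j)\<^sup>2)"
proof (cases "finite J")
  case fin: True
  let ?g = "\<lambda>j. complex_of_real (exp (- (\<sigma> * t\<^sup>2 * (c j)\<^sup>2) / 2))"
  have "exp (- (\<sigma> * t\<^sup>2 * (\<Sum>j\<in>J. (c j)\<^sup>2)) / 2) = exp (\<Sum>j\<in>J. - (\<sigma> * t\<^sup>2 * (c j)\<^sup>2) / 2)"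
    by (simp add: sum_distrib_left sum_divide_distrib sum_negf)
  then have gauss_prod: "complex_of_real (exp (- (\<sigma> * t\<^sup>2 * (\<Sum>j\<in>J. (c j)\<^sup>2)) / 2)) = (\<Prod>j\<in>J. ?g j)"
    by (simp add: exp_sum[OF fin] flip: of_real_prod)
  have "norm ((\<Prod>j\<in>J. \<psi> (c j * t)) - (\<Prod>j\<in>J. ?g j)) \<le> (\<Sum>j\<in>J. norm (\<psi> (c j * t) - ?g j))"
    by (rule norm_prod_diff) (use norm_le_1 variance_nonneg in auto)
  also have "\<dots> \<le> (\<Sum>j\<in>J. (C * \<bar>t\<bar> ^ 3 * m + \<sigma>\<^sup>2 * t ^ 4 * m\<^sup>2 / 8) * (c j)\<^sup>2)"
    using c by (intro sum_mono norm_sub_gaussian_factor_le) auto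
  finally show ?thesis
    unfolding gauss_prod by (simp only: sum_distrib_left)
qed simp

lemma norm_prod_diff_le_lipschitz:
  assumes "\<And>j. j \<in> J \<Longrightarrow> \<bar>a j - b j\<bar> \<le> \<delta>"
  shows "norm ((\<Prod>j\<in>J. \<psi> (a j * t)) - (\<Prod>j\<in>J. \<psi> (b j * t))) \<le> real (card J) * L * \<bar>t\<bar> * \<delta>"
proof -
  have "norm ((\<Prod>j\<in>J. \<psi> (a j * t)) - (\<Prod>j\<in>J. \<psi> (b j * t))) \<le> (\<Sum>j\<in>J. norm (\<psi> (a j * t) - \<psi> (b j * t)))"
    by (rule norm_prod_diff) (use norm_le_1 in auto)
  also have "\<dots> \<le> (\<Sum>j\<in>J. L * \<bar>t\<bar> * \<delta>)"
  proof (rule sum_mono)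
    fix j assume "j \<in> J"
    have "norm (\<psi> (a j * t) - \<psi> (b j * t)) \<le> L * (\<bar>a j - b j\<bar> * \<bar>t\<bar>)"
      using lipschitz[of "a j * t" "b j * t"] by (simp add: abs_mult flip: left_diff_distrib)
    also have "\<dots> \<le> L * (\<delta> * \<bar>t\<bar>)"
      using assms[OF \<open>j \<in> J\<close>] L_nonneg by (intro mult_left_mono mult_right_mono) auto
    finally show "norm (\<psi> (a j * t) - \<psi> (b j * t)) \<le> L * \<bar>t\<bar> * \<delta>"
      by (simp add: ac_simps)
  qed
  finally show ?thesis by simp
qed

text \<open>Split at index \<open>K\<close>: on the first \<open>K\<close> coordinates the two products are compared
  factor by factor, while beyond \<open>K\<close> all weights are at most \<open>m\<close>, so both tails are close
  to Gaussian factors whose variances differ only through the first \<open>K\<close> weights.\<close>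

lemma norm_prod_weights_diff_le:
  assumes a: "decreasing_unit_weights p a" and b: "decreasing_unit_weights p b"
    and K: "K \<le> p" and \<delta>: "\<And>j. j \<in> {1..p} \<Longrightarrow> \<bar>a j - b j\<bar> \<le> \<delta>"
  defines "m \<equiv> 1 / sqrt (real K + 1)"
  shows "norm ((\<Prod>j=1..p. \<psi> (a j * t)) - (\<Prod>j=1..p. \<psi> (b j * t)))
     \<le> real K * (L * \<bar>t\<bar> + \<sigma> * t\<^sup>2) * \<delta> + 2 * (C * \<bar>t\<bar> ^ 3 * m + \<sigma>\<^sup>2 * t ^ 4 * m\<^sup>2 / 8)"
proof -
  let ?gauss = "\<lambda>S. complex_of_real (exp (- (\<sigma> * t\<^sup>2 * S) / 2))"
  define \<tau> where "\<tau> = C * \<bar>t\<bar> ^ 3 * m + \<sigma>\<^sup>2 * t ^ 4 * m\<^sup>2 / 8"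
  define Sa where "Sa = (\<Sum>j=K+1..p. (a j)\<^sup>2)"
  define Sb where "Sb = (\<Sum>j=K+1..p. (b j)\<^sup>2)"
  have tail: "norm ((\<Prod>j=K+1..p. \<psi> (c j * t)) - ?gauss (\<Sum>j=K+1..p. (c j)\<^sup>2)) \<le> \<tau>"
    if c: "decreasing_unit_weights p c" for c
  proof -
    have "norm ((\<Prod>j=K+1..p. \<psi> (c j * t)) - ?gauss (\<Sum>j=K+1..p. (c j)\<^sup>2)) \<le> \<tau> * (\<Sum>j=K+1..p. (c j)\<^sup>2)"
      unfolding \<tau>_def m_def using decreasing_unit_weights_nonneg[OF c] decreasing_unit_weights_le_inverse_sqrt[OF c]
      by (intro norm_prod_sub_gaussian_le) auto
    also have "\<dots> \<le> \<tau>"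
      using decreasing_unit_weights_tail_sum_sq_le_1[OF c K] C_nonneg by (intro mult_left_le) (auto simp: \<tau>_def m_def)
    finally show ?thesis .
  qed
  have "norm (?gauss Sa - ?gauss Sb) = \<bar>exp (- (\<sigma> * t\<^sup>2 * Sa / 2)) - exp (- (\<sigma> * t\<^sup>2 * Sb / 2))\<bar>"
    by (simp flip: of_real_diff)
  also have "\<dots> \<le> \<sigma> * t\<^sup>2 / 2 * \<bar>Sa - Sb\<bar>"
    using abs_exp_minus_diff_le[of "\<sigma> * t\<^sup>2 * Sa / 2" "\<sigma> * t\<^sup>2 * Sb / 2"] variance_nonneg
    by (simp add: Sa_def Sb_def abs_mult sum_nonneg flip: right_diff_distrib diff_divide_distrib)
  also have "\<dots> \<le> \<sigma> * t\<^sup>2 / 2 * (2 * real K * \<delta>)"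
    unfolding Sa_def Sb_def using variance_nonneg decreasing_unit_weights_tail_sum_sq_diff_le[OF a b K \<delta>]
    by (intro mult_left_mono) auto
  finally have gauss: "norm (?gauss Sa - ?gauss Sb) \<le> \<sigma> * t\<^sup>2 * real K * \<delta>"
    by simp
  have tails: "norm ((\<Prod>j=K+1..p. \<psi> (a j * t)) - (\<Prod>j=K+1..p. \<psi> (b j * t)))
      \<le> \<tau> + \<sigma> * t\<^sup>2 * real K * \<delta> + \<tau>"
    using tail[OF a] tail[OF b] unfolding Sa_def[symmetric] Sb_def[symmetric]
    by (intro norm_diff_triangle_le[OF norm_diff_triangle_le[OF _ gauss]]) (auto simp: norm_minus_commute)
  have head: "norm ((\<Prod>j=1..K. \<psi> (a j * t)) - (\<Prod>j=1..K. \<psi> (b j * t))) \<le> real K * L * \<bar>t\<bar> * \<delta>"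
    using norm_prod_diff_le_lipschitz[of "{1..K}" a b \<delta> t] \<delta> K by auto
  have "{1..p} = {1..K} \<union> {K+1..p}" "{1..K} \<inter> {K+1..p} = {}"
    using K by auto
  then have "(\<Prod>j=1..p. f j) = (\<Prod>j=1..K. f j) * (\<Prod>j=K+1..p. f j)" for f :: "nat \<Rightarrow> complex"
    by (simp add: prod.union_disjoint)
  then have "norm ((\<Prod>j=1..p. \<psi> (a j * t)) - (\<Prod>j=1..p. \<psi> (b j * t)))
      \<le> norm ((\<Prod>j=1..K. \<psi> (a j * t)) - (\<Prod>j=1..K. \<psi> (b j * t)))
        + norm ((\<Prod>j=K+1..p. \<psi> (a j * t)) - (\<Prod>j=K+1..p. \<psi> (b j * t)))"
    by (simp only:) (rule norm_mult_diff_le; use norm_le_1 in \<open>auto simp: prod_norm[symmetric] intro!: prod_le_1\<close>)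
  also have "\<dots> \<le> real K * (L * \<bar>t\<bar> + \<sigma> * t\<^sup>2) * \<delta> + 2 * \<tau>"
    using head tails by (simp add: algebra_simps)
  finally show ?thesis by (simp add: \<tau>_def)
qed

lemma prod_weights_diff_tendsto_0:
  assumes a: "\<And>p. 1 \<le> p \<Longrightarrow> decreasing_unit_weights p (a p)"
    and b: "\<And>p. 1 \<le> p \<Longrightarrow> decreasing_unit_weights p (b p)"
    and close: "(\<lambda>p. Max ((\<lambda>j. \<bar>a p j - b p j\<bar>) ` {1..p})) \<longlonglongrightarrow> 0"
  shows "(\<lambda>p. (\<Prod>j=1..p. \<psi> (a p j * t)) - (\<Prod>j=1..p. \<psi> (b p j * t))) \<longlonglongrightarrow> 0"
  unfolding tendsto_iff dist_norm diff_zero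
proof (intro allI impI)
  fix \<epsilon> :: real assume \<epsilon>: "0 < \<epsilon>"
  define m where "m K = 1 / sqrt (real K + 1)" for K :: nat
  have "m = (\<lambda>K. sqrt (inverse (real (Suc K))))"
    by (simp add: fun_eq_iff m_def real_sqrt_inverse divide_inverse add.commute)
  then have "m \<longlonglongrightarrow> 0"
    using tendsto_real_sqrt[OF LIMSEQ_inverse_real_of_nat] by simp
  then have "(\<lambda>K. 2 * (C * \<bar>t\<bar> ^ 3 * m K + \<sigma>\<^sup>2 * t ^ 4 * (m K)\<^sup>2 / 8)) \<longlonglongrightarrow> 0"
    by (auto intro!: tendsto_eq_intros)
  from order_tendstoD(2)[OF this, of "\<epsilon> / 2"] \<epsilon>
  obtain K where tail: "2 * (C * \<bar>t\<bar> ^ 3 * m K + \<sigma>\<^sup>2 * t ^ 4 * (m K)\<^sup>2 / 8) < \<epsilon> / 2"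
    by (auto simp: eventually_sequentially)
  define \<delta> where "\<delta> p = Max ((\<lambda>j. \<bar>a p j - b p j\<bar>) ` {1..p})" for p
  have "(\<lambda>p. real K * (L * \<bar>t\<bar> + \<sigma> * t\<^sup>2) * \<delta> p) \<longlonglongrightarrow> 0"
    using tendsto_mult_right_zero[OF close] by (simp add: \<delta>_def)
  then have "eventually (\<lambda>p. real K * (L * \<bar>t\<bar> + \<sigma> * t\<^sup>2) * \<delta> p < \<epsilon> / 2) sequentially"
    using \<epsilon> by (intro order_tendstoD(2)) auto
  moreover have "eventually (\<lambda>p. max K 1 \<le> p) sequentially"
    by (rule eventually_ge_at_top)
  ultimately show "eventually (\<lambda>p. norm ((\<Prod>j=1..p. \<psi> (a p j * t)) - (\<Prod>j=1..p. \<psi> (b p j * t))) < \<epsilon>) sequentially"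
  proof eventually_elim
    case (elim p)
    have "\<bar>a p j - b p j\<bar> \<le> \<delta> p" if "j \<in> {1..p}" for j
      unfolding \<delta>_def using that by (intro Max_ge) auto
    then have "norm ((\<Prod>j=1..p. \<psi> (a p j * t)) - (\<Prod>j=1..p. \<psi> (b p j * t)))
        \<le> real K * (L * \<bar>t\<bar> + \<sigma> * t\<^sup>2) * \<delta> p + 2 * (C * \<bar>t\<bar> ^ 3 * m K + \<sigma>\<^sup>2 * t ^ 4 * (m K)\<^sup>2 / 8)"
      unfolding m_def using elim by (intro norm_prod_weights_diff_le a b) auto
    then show ?case using elim tail by linarith
  qed
qed

end

lemma (in real_distribution) norm_char_diff_le:
  assumes "integrable M (\<lambda>x. x)"
  shows "norm (char M s - char M s') \<le> \<bar>s - s'\<bar> * expectation (\<lambda>x. \<bar>x\<bar>)"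
proof -
  have iexp: "integrable M (\<lambda>x. iexp (u * x))" for u
    by (rule integrable_iexp) auto
  have "char M s - char M s' = (CLINT x|M. iexp (s * x) - iexp (s' * x))"
    unfolding char_def by (rule Bochner_Integration.integral_diff[symmetric, OF iexp iexp])
  then have "norm (char M s - char M s') = norm (CLINT x|M. iexp (s * x) - iexp (s' * x))"
    by simp
  also have "\<dots> \<le> (\<integral>x. norm (iexp (s * x) - iexp (s' * x)) \<partial>M)"
    by (rule integral_norm_bound)
  also have "\<dots> \<le> (\<integral>x. \<bar>s - s'\<bar> * \<bar>x\<bar> \<partial>M)"
  proof (rule integral_mono)
    show "integrable M (\<lambda>x. norm (iexp (s * x) - iexp (s' * x)))" using iexp by auto
    show "integrable M (\<lambda>x. \<bar>s - s'\<bar> * \<bar>x\<bar>)" using assms by auto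
    fix x
    have "norm (iexp (s * x) - iexp (s' * x)) = norm (iexp ((s - s') * x) - 1)"
    proof -
      have "iexp (s * x) - iexp (s' * x) = iexp (s' * x) * (iexp ((s - s') * x) - 1)"
        by (simp add: algebra_simps flip: exp_add)
      then show ?thesis by (simp add: norm_mult del: of_real_mult)
    qed
    also have "\<dots> \<le> \<bar>(s - s') * x\<bar>"
      using iexp_approx1[of "(s - s') * x" 0] by simp
    finally show "norm (iexp (s * x) - iexp (s' * x)) \<le> \<bar>s - s'\<bar> * \<bar>x\<bar>"
      by (simp add: abs_mult)
  qed
  finally show ?thesis by simp
qed

lemma (in prob_space) norm_char_sub_second_order_le:
  assumes X[measurable]: "random_variable borel X"
    and "integrable M (\<lambda>x. (X x)\<^sup>2)" "integrable M (\<lambda>x. \<bar>X x\<bar> ^ 3)" "expectation X = 0"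
  shows "norm (char (distr M borel X) s - complex_of_real (1 - s\<^sup>2 * expectation (\<lambda>x. (X x)\<^sup>2) / 2))
           \<le> expectation (\<lambda>x. \<bar>X x\<bar> ^ 3) / 6 * \<bar>s\<bar> ^ 3"
proof -
  have "integrable M X"
    using square_integrable_imp_integrable[OF X assms(2)] .
  then have "norm (char (distr M borel X) s - (1 - s\<^sup>2 * expectation (\<lambda>x. (X x)\<^sup>2) / 2))
      \<le> s\<^sup>2 / 6 * expectation (\<lambda>x. min (6 * (X x)\<^sup>2) (\<bar>s\<bar> * \<bar>X x\<bar> ^ 3))"
    using assms by (intro char_approx3') auto
  also have "\<dots> \<le> s\<^sup>2 / 6 * expectation (\<lambda>x. \<bar>s\<bar> * \<bar>X x\<bar> ^ 3)"
    using assms by (intro mult_left_mono integral_mono') auto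
  also have "\<dots> = expectation (\<lambda>x. \<bar>X x\<bar> ^ 3) / 6 * (s\<^sup>2 * \<bar>s\<bar>)"
    by (simp only: integral_mult_right_zero mult_ac divide_inverse)
  also have "s\<^sup>2 * \<bar>s\<bar> = \<bar>s\<bar> ^ 3"
    by (cases "0 \<le> s") (simp_all add: power2_eq_square power3_eq_cube)
  finally show ?thesis
    by (simp only: of_real_diff of_real_1 of_real_divide of_real_mult of_real_power of_real_numeral)
qed

lemma (in prob_space) char_distr_scale:
  assumes [measurable]: "random_variable borel X"
  shows "char (distr M borel (\<lambda>\<omega>. c * X \<omega>)) t = char (distr M borel X) (c * t)"
  unfolding char_def by (simp add: integral_distr ac_simps)

definition centred_normal :: "real \<Rightarrow> real measure" where
  "centred_normal \<sigma> = distr std_normal_distribution borel (\<lambda>x. sqrt \<sigma> * x)"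

lemma real_distribution_centred_normal: "real_distribution (centred_normal \<sigma>)"
proof -
  interpret real_distribution std_normal_distribution
    by (rule real_dist_normal_dist)
  show ?thesis
    unfolding centred_normal_def by (rule real_distribution_distr) simp
qed

lemma char_centred_normal:
  assumes "0 \<le> \<sigma>"
  shows "char (centred_normal \<sigma>) t = complex_of_real (exp (- (\<sigma> * t\<^sup>2) / 2))"
proof -
  have "char (centred_normal \<sigma>) t = char std_normal_distribution (sqrt \<sigma> * t)"
    unfolding centred_normal_def char_def by (simp add: integral_distr ac_simps)
  then show ?thesis
    using assms by (simp add: char_std_normal_distribution power_mult_distrib)
qed

lemma measure_centred_normal_singleton:
  assumes "0 < \<sigma>"
  shows "measure (centred_normal \<sigma>) {x} = 0"
proof -
  have "emeasure std_normal_distribution {x / sqrt \<sigma>} = 0"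
    by (subst emeasure_density)
       (auto intro!: nn_integral_zero' AE_mp[OF AE_lborel_singleton[of "x / sqrt \<sigma>"]] split: split_indicator)
  moreover have "measure (centred_normal \<sigma>) {x} = measure std_normal_distribution {x / sqrt \<sigma>}"
    unfolding centred_normal_def using assms
    by (subst measure_distr) (auto intro!: arg_cong[where f = "measure _"] simp: field_simps)
  ultimately show ?thesis by (simp add: measure_def)
qed

section \<open>Uniform convergence of distribution functions\<close>

lemma (in real_distribution) uniformly_continuous_cdf:
  assumes atomless: "\<And>x. measure M {x} = 0"
  shows "uniformly_continuous_on UNIV (cdf M)"
  unfolding uniformly_continuous_on_def
proof (intro allI impI)
  fix \<epsilon> :: real assume \<epsilon>: "0 < \<epsilon>"
  obtain a where a: "\<And>x. x \<le> a \<Longrightarrow> cdf M x < \<epsilon>"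
    using order_tendstoD(2)[OF cdf_lim_at_bot \<epsilon>] by (auto simp: eventually_at_bot_linorder)
  obtain b where b: "\<And>x. b \<le> x \<Longrightarrow> 1 - \<epsilon> < cdf M x"
    using order_tendstoD(1)[OF cdf_lim_at_top_prob, of "1 - \<epsilon>"] \<epsilon>
    by (auto simp: eventually_at_top_linorder)
  have "continuous_on {a - 1..b + 1} (cdf M)"
    using atomless by (intro continuous_at_imp_continuous_on) (simp add: isCont_cdf)
  then have "uniformly_continuous_on {a - 1..b + 1} (cdf M)"
    by (rule compact_uniformly_continuous) simp
  then obtain \<delta> where \<delta>: "0 < \<delta>"
    and uc: "\<And>x x'. x \<in> {a - 1..b + 1} \<Longrightarrow> x' \<in> {a - 1..b + 1} \<Longrightarrow> dist x' x < \<delta> \<Longrightarrow> dist (cdf M x') (cdf M x) < \<epsilon>"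
    unfolding uniformly_continuous_on_def using \<epsilon> by metis
  show "\<exists>d>0. \<forall>x\<in>UNIV. \<forall>x'\<in>UNIV. dist x' x < d \<longrightarrow> dist (cdf M x') (cdf M x) < \<epsilon>"
  proof (intro exI[of _ "min \<delta> 1"] conjI ballI impI)
    fix x x' :: real assume close: "dist x' x < min \<delta> 1"
    consider "x \<in> {a - 1..b + 1}" "x' \<in> {a - 1..b + 1}" | "min x x' < a - 1" | "b + 1 < max x x'"
      by fastforce
    then show "dist (cdf M x') (cdf M x) < \<epsilon>"
    proof cases
      case 1 with uc close show ?thesis by auto
    next
      case 2
      then have "x \<le> a" "x' \<le> a" using close by (auto simp: dist_real_def)
      then show ?thesis
        using a[of x] a[of x'] cdf_nonneg[of x] cdf_nonneg[of x'] by (simp add: dist_real_def abs_less_iff)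
    next
      case 3
      then have "b \<le> x" "b \<le> x'" using close by (auto simp: dist_real_def)
      then show ?thesis
        using b[of x] b[of x'] cdf_bounded_prob[of x] cdf_bounded_prob[of x']
        by (simp add: dist_real_def abs_less_iff)
    qed
  qed (use \<delta> in simp)
qed

lemma (in real_distribution) atomless_imp_small_intervals:
  assumes "\<And>x. measure M {x} = 0" "0 < \<epsilon>"
  obtains w where "0 < w" "\<And>y. measure M {y<..y + w} < \<epsilon>"
proof -
  obtain \<delta> where "0 < \<delta>" and \<delta>: "\<And>x x'. dist x' x < \<delta> \<Longrightarrow> dist (cdf M x') (cdf M x) < \<epsilon>"
    using uniformly_continuous_cdf[OF assms(1)] assms(2) unfolding uniformly_continuous_on_def by blast
  have "measure M {y<..y + \<delta> / 2} < \<epsilon>" for y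
    using \<delta>[of "y + \<delta> / 2" y] \<open>0 < \<delta>\<close> by (simp add: cdf_diff_eq dist_real_def)
  then show ?thesis
    using that[of "\<delta> / 2"] \<open>0 < \<delta>\<close> by simp
qed

lemma mono_close_on_grid_imp_close:
  fixes F G :: "real \<Rightarrow> real" and m :: nat
  assumes mono: "mono F" "mono G" and bounds: "\<And>x. F x \<in> {0..1}" "\<And>x. G x \<in> {0..1}"
    and h: "0 < h" and tails: "F a < \<epsilon>" "1 - \<epsilon> < F (a + real m * h)"
    and steps: "\<And>i. i < m \<Longrightarrow> F (a + real (Suc i) * h) - F (a + real i * h) < \<epsilon>"
    and grid: "\<And>i. i \<le> m \<Longrightarrow> \<bar>G (a + real i * h) - F (a + real i * h)\<bar> < \<epsilon>"
  shows "\<bar>G x - F x\<bar> < 2 * \<epsilon>"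
proof -
  define xs where "xs i = a + real i * h" for i
  have mono_at: "f y \<le> f z" if "mono f" "y \<le> z" for f :: "real \<Rightarrow> real" and y z
    using that by (rule monoD)
  consider "x < a" | "a + real m * h \<le> x" | "a \<le> x" "x < a + real m * h" by linarith
  then show ?thesis
  proof cases
    case 1
    then show ?thesis
      using mono_at[OF mono(1), of x a] mono_at[OF mono(2), of x a] grid[of 0] tails(1) bounds[of x]
      by auto
  next
    case 2
    then show ?thesis
      using mono_at[OF mono(1) 2] mono_at[OF mono(2) 2] grid[of m] tails(2) bounds[of x]
      by auto
  next
    case 3
    define k where "k = \<lfloor>(x - a) / h\<rfloor>"
    have "0 \<le> k" using 3 h by (simp add: k_def)
    define i where "i = nat k"
    have "real i = of_int k" using \<open>0 \<le> k\<close> by (simp add: i_def)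
    moreover have "of_int k \<le> (x - a) / h" "(x - a) / h < of_int k + 1"
      unfolding k_def by linarith+
    ultimately have "real i \<le> (x - a) / h" "(x - a) / h < real i + 1"
      by simp_all
    then have lo: "xs i \<le> x" and hi: "x < xs (Suc i)"
      using h by (simp_all add: xs_def field_simps)
    have "real i * h < real m * h" using lo 3 by (simp add: xs_def)
    then have "i < m" using h by simp
    then show ?thesis
      using mono_at[OF mono(1) lo] mono_at[OF mono(1) less_imp_le[OF hi]]
        mono_at[OF mono(2) lo] mono_at[OF mono(2) less_imp_le[OF hi]]
        grid[of i] grid[of "Suc i"] steps[of i]
      by (auto simp: xs_def abs_less_iff)
  qed
qed

lemma (in real_distribution) cdf_fine_grid:
  assumes atomless: "\<And>x. measure M {x} = 0" and "0 < \<epsilon>"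
  obtains h a m where "0 < h" "cdf M a < \<epsilon>" "1 - \<epsilon> < cdf M (a + real m * h)"
    "\<And>i. cdf M (a + real (Suc i) * h) - cdf M (a + real i * h) < \<epsilon>"
proof -
  obtain \<delta> where "0 < \<delta>" and uc: "\<And>x x'. dist x' x < \<delta> \<Longrightarrow> dist (cdf M x') (cdf M x) < \<epsilon>"
    using uniformly_continuous_cdf[OF atomless] \<open>0 < \<epsilon>\<close> unfolding uniformly_continuous_on_def by blast
  obtain a where a: "cdf M a < \<epsilon>"
    using order_tendstoD(2)[OF cdf_lim_at_bot \<open>0 < \<epsilon>\<close>] by (auto simp: eventually_at_bot_linorder)
  obtain b0 where b0: "\<And>x. b0 \<le> x \<Longrightarrow> 1 - \<epsilon> < cdf M x"
    using order_tendstoD(1)[OF cdf_lim_at_top_prob, of "1 - \<epsilon>"] \<open>0 < \<epsilon>\<close>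
    by (auto simp: eventually_at_top_linorder)
  define b where "b = max b0 (a + 1)"
  define m :: nat where "m = nat \<lceil>(b - a) / \<delta>\<rceil> + 1"
  define h where "h = (b - a) / real m"
  have "a < b" by (simp add: b_def)
  have "1 \<le> m" "(b - a) / \<delta> < real m"
    unfolding m_def by linarith+
  then have h: "0 < h" "h < \<delta>" and mh: "a + real m * h = b"
    using \<open>a < b\<close> \<open>0 < \<delta>\<close> by (simp_all add: h_def field_simps)
  show ?thesis
  proof (rule that[OF h(1) a])
    show "1 - \<epsilon> < cdf M (a + real m * h)"
      using b0 mh by (simp add: b_def)
    show "cdf M (a + real (Suc i) * h) - cdf M (a + real i * h) < \<epsilon>" for i
      using uc[of "a + real (Suc i) * h" "a + real i * h"] h by (simp add: dist_real_def algebra_simps)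
  qed
qed

theorem weak_conv_imp_uniform_cdf_conv:
  fixes F :: "nat \<Rightarrow> real measure"
  assumes F: "\<And>n. real_distribution (F n)" and \<mu>: "real_distribution \<mu>"
    and conv: "weak_conv_m F \<mu>" and atomless: "\<And>x. measure \<mu> {x} = 0"
  shows "uniform_limit UNIV (\<lambda>n. cdf (F n)) (cdf \<mu>) sequentially"
  unfolding uniform_limit_iff
proof (intro allI impI)
  interpret \<mu>: real_distribution \<mu> by (rule \<mu>)
  fix e :: real assume "0 < e"
  then have "0 < e / 2" by simp
  then obtain h a m where h: "0 < h" and grid: "cdf \<mu> a < e / 2" "1 - e / 2 < cdf \<mu> (a + real m * h)"
    "\<And>i. cdf \<mu> (a + real (Suc i) * h) - cdf \<mu> (a + real i * h) < e / 2"
    using \<mu>.cdf_fine_grid[OF atomless] by blast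
  have "eventually (\<lambda>n. \<forall>i\<in>{..m}. \<bar>cdf (F n) (a + real i * h) - cdf \<mu> (a + real i * h)\<bar> < e / 2) sequentially"
  proof (rule eventually_ball_finite, simp, intro ballI)
    fix i
    have "(\<lambda>n. cdf (F n) (a + real i * h)) \<longlonglongrightarrow> cdf \<mu> (a + real i * h)"
      using conv atomless \<mu>.isCont_cdf unfolding weak_conv_m_def weak_conv_def by blast
    then show "eventually (\<lambda>n. \<bar>cdf (F n) (a + real i * h) - cdf \<mu> (a + real i * h)\<bar> < e / 2) sequentially"
      using \<open>0 < e / 2\<close> unfolding tendsto_iff dist_real_def by blast
  qed
  then show "eventually (\<lambda>n. \<forall>x\<in>UNIV. dist (cdf (F n) x) (cdf \<mu> x) < e) sequentially"
  proof eventually_elim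
    case (elim n)
    interpret Fn: real_distribution "F n" by (rule F)
    have "\<bar>cdf (F n) x - cdf \<mu> x\<bar> < 2 * (e / 2)" for x
    proof (rule mono_close_on_grid_imp_close[where F = "cdf \<mu>" and G = "cdf (F n)" and m = m, OF _ _ _ _ h grid])
      show "mono (cdf \<mu>)" "mono (cdf (F n))"
        by (auto intro!: monoI \<mu>.cdf_nondecreasing Fn.cdf_nondecreasing)
      show "cdf \<mu> y \<in> {0..1}" "cdf (F n) y \<in> {0..1}" for y
        using \<mu>.cdf_nonneg \<mu>.cdf_bounded_prob Fn.cdf_nonneg Fn.cdf_bounded_prob by auto
      show "\<bar>cdf (F n) (a + real i * h) - cdf \<mu> (a + real i * h)\<bar> < e / 2" if "i \<le> m" for i
        using elim that by auto
    qed
    then show ?case by (simp add: dist_real_def)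
  qed
qed

definition kolmogorov_dist :: "real measure \<Rightarrow> real measure \<Rightarrow> real" where
  "kolmogorov_dist \<mu> \<nu> = (SUP x. \<bar>cdf \<mu> x - cdf \<nu> x\<bar>)"

corollary kolmogorov_dist_tendsto_0:
  fixes F G :: "nat \<Rightarrow> real measure"
  assumes F: "\<And>n. real_distribution (F n)" and G: "\<And>n. real_distribution (G n)"
    and \<mu>: "real_distribution \<mu>" and atomless: "\<And>x. measure \<mu> {x} = 0"
    and F_conv: "weak_conv_m F \<mu>" and G_conv: "weak_conv_m G \<mu>"
  shows "(\<lambda>n. kolmogorov_dist (F n) (G n)) \<longlonglongrightarrow> 0"
  unfolding tendsto_iff
proof (intro allI impI)
  fix e :: real assume "0 < e"
  have "uniform_limit UNIV (\<lambda>n. cdf (F n)) (cdf \<mu>) sequentially"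
      "uniform_limit UNIV (\<lambda>n. cdf (G n)) (cdf \<mu>) sequentially"
    by (rule weak_conv_imp_uniform_cdf_conv[OF F \<mu> F_conv atomless],
        rule weak_conv_imp_uniform_cdf_conv[OF G \<mu> G_conv atomless])
  moreover have "0 < e / 3" using \<open>0 < e\<close> by simp
  ultimately have "eventually (\<lambda>n. \<forall>x\<in>UNIV. dist (cdf (F n) x) (cdf \<mu> x) < e / 3) sequentially"
      "eventually (\<lambda>n. \<forall>x\<in>UNIV. dist (cdf (G n) x) (cdf \<mu> x) < e / 3) sequentially"
    unfolding uniform_limit_iff by blast+
  then show "eventually (\<lambda>n. dist (kolmogorov_dist (F n) (G n)) 0 < e) sequentially"
  proof eventually_elim
    case (elim n)
    have bound: "\<bar>cdf (F n) x - cdf (G n) x\<bar> \<le> 2 * e / 3" for x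
    proof -
      have "\<bar>cdf (F n) x - cdf (G n) x\<bar> \<le> \<bar>cdf (F n) x - cdf \<mu> x\<bar> + \<bar>cdf (G n) x - cdf \<mu> x\<bar>"
        using abs_triangle_ineq[of "cdf (F n) x - cdf \<mu> x" "cdf \<mu> x - cdf (G n) x"]
        by (simp add: abs_minus_commute)
      then show ?thesis
        using elim(1)[rule_format, OF UNIV_I, of x] elim(2)[rule_format, OF UNIV_I, of x]
        unfolding dist_real_def by linarith
    qed
    have "kolmogorov_dist (F n) (G n) \<le> 2 * e / 3"
      unfolding kolmogorov_dist_def by (rule cSUP_least) (use bound in auto)
    moreover have "0 \<le> kolmogorov_dist (F n) (G n)"
      unfolding kolmogorov_dist_def using bound
      by (intro order_trans[OF _ cSUP_upper[of 0]] bdd_aboveI2[where M = "2 * e / 3"]) auto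
    ultimately show ?case using \<open>0 < e\<close> by simp
  qed
qed

lemma weak_limit_atomless:
  fixes F :: "nat \<Rightarrow> real measure"
  assumes F: "\<And>n. real_distribution (F n)" and \<nu>: "real_distribution \<nu>" and conv: "weak_conv_m F \<nu>"
    and small: "\<And>\<epsilon>. 0 < \<epsilon> \<Longrightarrow> \<exists>w>0. eventually (\<lambda>n. \<forall>y. measure (F n) {y<..y + w} \<le> \<epsilon>) sequentially"
  shows "measure \<nu> {x} = 0"
proof -
  interpret \<nu>: real_distribution \<nu> by (rule \<nu>)
  have "measure \<nu> {x} \<le> \<epsilon>" if "0 < \<epsilon>" for \<epsilon>
  proof -
    obtain w where "0 < w" and w: "eventually (\<lambda>n. \<forall>y. measure (F n) {y<..y + w} \<le> \<epsilon>) sequentially"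
      using small[OF \<open>0 < \<epsilon>\<close>] by blast
    obtain y1 where y1: "x - w / 2 < y1" "y1 < x" "y1 \<notin> {y. 0 < measure \<nu> {y}}"
      using exists_between_not_in_countable[OF \<nu>.countable_atoms, of "x - w / 2" x] \<open>0 < w\<close> by auto
    obtain y2 where y2: "x < y2" "y2 < x + w / 2" "y2 \<notin> {y. 0 < measure \<nu> {y}}"
      using exists_between_not_in_countable[OF \<nu>.countable_atoms, of x "x + w / 2"] \<open>0 < w\<close> by auto
    have "(\<lambda>n. cdf (F n) y) \<longlonglongrightarrow> cdf \<nu> y" if "y \<notin> {y. 0 < measure \<nu> {y}}" for y
      using conv that \<nu>.isCont_cdf measure_nonneg[of \<nu> "{y}"]
      unfolding weak_conv_m_def weak_conv_def by (metis antisym_conv1 mem_Collect_eq)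
    then have lim: "(\<lambda>n. cdf (F n) y2 - cdf (F n) y1) \<longlonglongrightarrow> cdf \<nu> y2 - cdf \<nu> y1"
      using y1(3) y2(3) by (intro tendsto_diff)
    from w have "eventually (\<lambda>n. cdf (F n) y2 - cdf (F n) y1 \<le> \<epsilon>) sequentially"
    proof eventually_elim
      case (elim n)
      interpret Fn: real_distribution "F n" by (rule F)
      have "cdf (F n) y2 - cdf (F n) y1 = measure (F n) {y1<..y2}"
        using y1 y2 by (simp add: Fn.cdf_diff_eq)
      also have "\<dots> \<le> measure (F n) {y1<..y1 + w}"
        using y1 y2 by (intro Fn.finite_measure_mono) auto
      also have "\<dots> \<le> \<epsilon>"
        using elim by blast
      finally show ?case .
    qed
    then have "cdf \<nu> y2 - cdf \<nu> y1 \<le> \<epsilon>"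
      by (rule tendsto_upperbound[OF lim]) simp
    moreover have "measure \<nu> {x} \<le> cdf \<nu> y2 - cdf \<nu> y1"
      using y1 y2 \<nu>.finite_measure_mono[of "{x}" "{y1<..y2}"] by (simp add: \<nu>.cdf_diff_eq)
    ultimately show ?thesis by linarith
  qed
  then have "measure \<nu> {x} \<le> 0" by (rule field_le_epsilon) simp
  then show ?thesis using measure_nonneg[of \<nu> "{x}"] by linarith
qed

section \<open>Anti-concentration and second moments of independent sums\<close>

lemma (in prob_space) indep_sum_interval_prob_le:
  fixes U W :: "'a \<Rightarrow> real"
  assumes ind: "indep_var borel U borel W"
    and bound: "\<And>y. prob {\<omega> \<in> space M. U \<omega> \<in> {y<..y + w}} \<le> \<beta>"
  shows "prob {\<omega> \<in> space M. U \<omega> + W \<omega> \<in> {u<..u + w}} \<le> \<beta>"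
proof -
  have [measurable]: "random_variable borel U" "random_variable borel W"
    using indep_var_rv1[OF ind] indep_var_rv2[OF ind] .
  interpret PU: prob_space "distr M borel U" by (rule prob_space_distr) simp
  interpret PW: prob_space "distr M borel W" by (rule prob_space_distr) simp
  interpret P: pair_sigma_finite "distr M borel U" "distr M borel W" ..
  define A where "A = {z::real \<times> real. fst z + snd z \<in> {u<..u + w}}"
  have "(\<lambda>z::real \<times> real. fst z + snd z) \<in> borel_measurable (borel \<Otimes>\<^sub>M borel)"
    by measurable
  then have "(\<lambda>z::real \<times> real. fst z + snd z) -` {u<..u + w} \<inter> space (borel \<Otimes>\<^sub>M borel) \<in> sets (borel \<Otimes>\<^sub>M borel)"
    by (rule measurable_sets) simp
  then have A[measurable]: "A \<in> sets (borel \<Otimes>\<^sub>M borel)"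
    by (simp add: A_def space_pair_measure vimage_def)
  have "emeasure M {\<omega> \<in> space M. U \<omega> + W \<omega> \<in> {u<..u + w}} = emeasure (distr M (borel \<Otimes>\<^sub>M borel) (\<lambda>x. (U x, W x))) A"
    by (subst emeasure_distr[OF _ A]) (auto simp: A_def intro!: arg_cong[where f = "emeasure M"])
  also have "\<dots> = emeasure (distr M borel U \<Otimes>\<^sub>M distr M borel W) A"
    using ind by (simp add: indep_var_distribution_eq)
  also have "\<dots> = (\<integral>\<^sup>+y. emeasure (distr M borel U) ((\<lambda>x. (x, y)) -` A) \<partial>distr M borel W)"
    by (rule P.emeasure_pair_measure_alt2) simp
  also have "\<dots> \<le> (\<integral>\<^sup>+y. ennreal \<beta> \<partial>distr M borel W)"
  proof (rule nn_integral_mono)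
    fix y
    have "(\<lambda>x. (x, y)) -` A = {u - y<..u - y + w}" by (auto simp: A_def)
    then have "emeasure (distr M borel U) ((\<lambda>x. (x, y)) -` A) = ennreal (prob {\<omega> \<in> space M. U \<omega> \<in> {u - y<..u - y + w}})"
      by (subst emeasure_distr) (auto simp: emeasure_eq_measure intro!: arg_cong[where f = prob])
    then show "emeasure (distr M borel U) ((\<lambda>x. (x, y)) -` A) \<le> ennreal \<beta>"
      using bound by (simp add: ennreal_leI)
  qed
  also have "\<dots> = ennreal \<beta>" using PW.emeasure_space_1 by simp
  finally have "ennreal (prob {\<omega> \<in> space M. U \<omega> + W \<omega> \<in> {u<..u + w}}) \<le> ennreal \<beta>"
    by (simp add: emeasure_eq_measure)
  moreover have "0 \<le> \<beta>" using bound[of 0] measure_nonneg order_trans by blast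
  ultimately show ?thesis by simp
qed

lemma (in prob_space) indep_sum_square_expectation:
  fixes Y :: "'i \<Rightarrow> 'a \<Rightarrow> real"
  assumes "finite I" "indep_vars (\<lambda>_. borel) Y I"
    and "\<And>i. i \<in> I \<Longrightarrow> integrable M (\<lambda>\<omega>. (Y i \<omega>)\<^sup>2)" "\<And>i. i \<in> I \<Longrightarrow> expectation (Y i) = 0"
  shows "integrable M (\<lambda>\<omega>. (\<Sum>i\<in>I. Y i \<omega>)\<^sup>2)
    \<and> expectation (\<lambda>\<omega>. (\<Sum>i\<in>I. Y i \<omega>)\<^sup>2) = (\<Sum>i\<in>I. expectation (\<lambda>\<omega>. (Y i \<omega>)\<^sup>2))"
  using assms
proof (induction I rule: finite_induct)
  case (insert i I)
  have rv[measurable]: "random_variable borel (Y j)" if "j \<in> insert i I" for j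
    using insert.prems(1) that unfolding indep_vars_def by auto
  have integrable: "integrable M (Y j)" if "j \<in> insert i I" for j
    using square_integrable_imp_integrable[OF rv insert.prems(2)] that by simp
  have IH: "integrable M (\<lambda>\<omega>. (\<Sum>i\<in>I. Y i \<omega>)\<^sup>2)"
      "expectation (\<lambda>\<omega>. (\<Sum>i\<in>I. Y i \<omega>)\<^sup>2) = (\<Sum>i\<in>I. expectation (\<lambda>\<omega>. (Y i \<omega>)\<^sup>2))"
    using insert.prems by (auto intro!: insert.IH[THEN conjunct1] insert.IH[THEN conjunct2]
        indep_vars_subset[OF insert.prems(1)])
  have sum_integrable: "integrable M (\<lambda>\<omega>. \<Sum>i\<in>I. Y i \<omega>)"
    using integrable by auto
  have ind: "indep_var borel (Y i) borel (\<lambda>\<omega>. \<Sum>i\<in>I. Y i \<omega>)"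
    by (rule indep_vars_sum[OF insert.hyps insert.prems(1)])
  have cross: "integrable M (\<lambda>\<omega>. Y i \<omega> * (\<Sum>i\<in>I. Y i \<omega>))"
    "expectation (\<lambda>\<omega>. Y i \<omega> * (\<Sum>i\<in>I. Y i \<omega>)) = 0"
    using indep_var_integrable[OF ind] indep_var_lebesgue_integral[OF ind] integrable[of i] sum_integrable
      insert.prems(3)[of i] by auto
  have "(\<lambda>\<omega>. (\<Sum>j\<in>insert i I. Y j \<omega>)\<^sup>2)
      = (\<lambda>\<omega>. (Y i \<omega>)\<^sup>2 + 2 * (Y i \<omega> * (\<Sum>i\<in>I. Y i \<omega>)) + (\<Sum>i\<in>I. Y i \<omega>)\<^sup>2)"
    using insert.hyps by (simp add: power2_eq_square algebra_simps)
  then show ?case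
    using insert.prems(2)[of i] cross IH insert.hyps by simp
qed simp

section \<open>Weighted sums of i.i.d.\ centred atomless variables\<close>

locale centred_iid = prob_space +
  fixes X :: "nat \<Rightarrow> 'a \<Rightarrow> real"
  assumes indep: "indep_vars (\<lambda>_. borel) X UNIV"
    and identically_distributed: "\<And>j. distr M borel (X j) = distr M borel (X 0)"
    and integrable_abs_cube: "integrable M (\<lambda>\<omega>. \<bar>X 0 \<omega>\<bar> ^ 3)"
    and expectation_zero: "expectation (X 0) = 0"
    and atomless: "\<And>x. prob {\<omega> \<in> space M. X 0 \<omega> = x} = 0"
begin

definition law :: "real measure" where
  "law = distr M borel (X 0)"

definition \<psi> :: "real \<Rightarrow> complex" where
  "\<psi> = char law"

definition \<sigma> :: real where
  "\<sigma> = expectation (\<lambda>\<omega>. (X 0 \<omega>)\<^sup>2)"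

definition weighted_sum :: "(nat \<Rightarrow> real) \<Rightarrow> nat \<Rightarrow> 'a \<Rightarrow> real" where
  "weighted_sum c p \<omega> = (\<Sum>j=1..p. c j * X j \<omega>)"

definition weighted_law :: "(nat \<Rightarrow> real) \<Rightarrow> nat \<Rightarrow> real measure" where
  "weighted_law c p = distr M borel (weighted_sum c p)"

lemma random_variable_X[measurable]: "random_variable borel (X j)"
  using indep unfolding indep_vars_def by auto

lemma random_variable_weighted_sum[measurable]: "random_variable borel (weighted_sum c p)"
  unfolding weighted_sum_def[abs_def] by measurable

lemma real_distribution_law: "real_distribution law"
  unfolding law_def by simp

lemma real_distribution_weighted_law: "real_distribution (weighted_law c p)"
  unfolding weighted_law_def by simp

lemma distr_X: "distr M borel (X j) = law"
  using identically_distributed[of j] by (simp only: law_def)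

lemma prob_X_in:
  assumes "A \<in> sets borel"
  shows "prob {\<omega> \<in> space M. X j \<omega> \<in> A} = measure law A"
proof -
  have "measure (distr M borel (X j)) A = prob (X j -` A \<inter> space M)"
    by (rule measure_distr) (use assms in auto)
  then show ?thesis
    by (simp add: distr_X vimage_def Int_def conj_commute)
qed

lemma measure_law_singleton: "measure law {x} = 0"
  using prob_X_in[of "{x}" 0] atomless[of x] by simp

lemma integrable_X_iff:
  fixes f :: "real \<Rightarrow> real"
  assumes [measurable]: "f \<in> borel_measurable borel"
  shows "integrable M (\<lambda>\<omega>. f (X j \<omega>)) \<longleftrightarrow> integrable M (\<lambda>\<omega>. f (X 0 \<omega>))"
  using integrable_distr_eq[of "X j" M borel f] integrable_distr_eq[of "X 0" M borel f]
  by (simp add: distr_X)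

lemma expectation_X_eq:
  fixes f :: "real \<Rightarrow> real"
  assumes [measurable]: "f \<in> borel_measurable borel"
  shows "expectation (\<lambda>\<omega>. f (X j \<omega>)) = expectation (\<lambda>\<omega>. f (X 0 \<omega>))"
  using integral_distr[of "X j" M borel f] integral_distr[of "X 0" M borel f]
  by (simp add: distr_X)

lemma integrable_abs_power_X:
  assumes "k \<le> 3"
  shows "integrable M (\<lambda>\<omega>. \<bar>X j \<omega>\<bar> ^ k)"
proof -
  have "integrable M (\<lambda>\<omega>. \<bar>X 0 \<omega>\<bar> ^ k)"
  proof (rule Bochner_Integration.integrable_bound)
    show "integrable M (\<lambda>\<omega>. 1 + \<bar>X 0 \<omega>\<bar> ^ 3)"
      using integrable_abs_cube by simp
    show "AE \<omega> in M. norm (\<bar>X 0 \<omega>\<bar> ^ k) \<le> norm (1 + \<bar>X 0 \<omega>\<bar> ^ 3)"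
      using abs_power_le_1_plus_abs_power[OF assms] by (simp add: add_nonneg_nonneg)
  qed simp
  then show ?thesis
    using integrable_X_iff[of "\<lambda>x. \<bar>x\<bar> ^ k" j] by simp
qed

lemma integrable_X: "integrable M (X j)"
  using integrable_abs_power_X[of 1 j] integrable_abs_iff[of "X j" M] by simp

lemma integrable_X_square: "integrable M (\<lambda>\<omega>. (X j \<omega>)\<^sup>2)"
  using integrable_abs_power_X[of 2 j] by simp

lemma expectation_X: "expectation (X j) = 0"
  using expectation_X_eq[of "\<lambda>x. x" j] expectation_zero by simp

lemma expectation_X_square: "expectation (\<lambda>\<omega>. (X j \<omega>)\<^sup>2) = \<sigma>"
  using expectation_X_eq[of "\<lambda>x. x\<^sup>2" j] by (simp add: \<sigma>_def)

text \<open>An atomless variable is not almost surely zero.\<close>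

lemma \<sigma>_pos: "0 < \<sigma>"
proof -
  have "\<sigma> \<noteq> 0"
  proof
    assume "\<sigma> = 0"
    then have "AE \<omega> in M. (X 0 \<omega>)\<^sup>2 = 0"
      using integral_nonneg_eq_0_iff_AE[OF integrable_X_square[of 0]] by (simp add: \<sigma>_def)
    then have "prob {\<omega> \<in> space M. X 0 \<omega> = 0} = 1"
      by (subst prob_Collect_eq_1) auto
    with atomless[of 0] show False by simp
  qed
  moreover have "0 \<le> \<sigma>" unfolding \<sigma>_def by simp
  ultimately show ?thesis by simp
qed

sublocale second_order_char \<psi> \<sigma> "expectation (\<lambda>\<omega>. \<bar>X 0 \<omega>\<bar> ^ 3) / 6" "expectation (\<lambda>\<omega>. \<bar>X 0 \<omega>\<bar>)"
proof
  interpret law: real_distribution law by (rule real_distribution_law)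
  show "norm (\<psi> s) \<le> 1" for s
    unfolding \<psi>_def by (rule law.cmod_char_le_1)
  show "norm (\<psi> s - complex_of_real (1 - s\<^sup>2 * \<sigma> / 2)) \<le> expectation (\<lambda>\<omega>. \<bar>X 0 \<omega>\<bar> ^ 3) / 6 * \<bar>s\<bar> ^ 3" for s
    unfolding \<psi>_def law_def \<sigma>_def
    by (rule norm_char_sub_second_order_le)
       (auto simp: integrable_X_square integrable_abs_cube expectation_zero)
  have "integrable law (\<lambda>x. x)"
    unfolding law_def using integrable_X[of 0] by (subst integrable_distr_eq) auto
  moreover have "law.expectation (\<lambda>x. \<bar>x\<bar>) = expectation (\<lambda>\<omega>. \<bar>X 0 \<omega>\<bar>)"
    unfolding law_def by (subst integral_distr) auto
  ultimately show "norm (\<psi> s - \<psi> s') \<le> expectation (\<lambda>\<omega>. \<bar>X 0 \<omega>\<bar>) * \<bar>s - s'\<bar>" for s s'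
    unfolding \<psi>_def using law.norm_char_diff_le by (simp add: mult.commute)
  show "0 \<le> \<sigma>" using \<sigma>_pos by simp
qed

lemma indep_weighted_terms: "indep_vars (\<lambda>_. borel) (\<lambda>j \<omega>. c j * X j \<omega>) J"
  by (rule indep_vars_subset[OF indep_vars_compose2[OF indep, where Y = "\<lambda>j x. c j * x"]]) auto

lemma char_weighted_law: "char (weighted_law c p) t = (\<Prod>j=1..p. \<psi> (c j * t))"
proof -
  have "char (weighted_law c p) t = (\<Prod>j=1..p. char (distr M borel (\<lambda>\<omega>. c j * X j \<omega>)) t)"
    unfolding weighted_law_def weighted_sum_def[abs_def] by (rule char_distr_sum[OF indep_weighted_terms])
  also have "\<dots> = (\<Prod>j=1..p. \<psi> (c j * t))"
    by (simp add: char_distr_scale distr_X \<psi>_def)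
  finally show ?thesis .
qed

lemma cdf_weighted_law: "cdf (weighted_law c p) x = prob {\<omega> \<in> space M. weighted_sum c p \<omega> \<le> x}"
  unfolding cdf_def weighted_law_def
  by (subst measure_distr) (auto simp: vimage_def Int_def conj_commute)

lemma expectation_weighted_sum: "expectation (weighted_sum c p) = 0"
  unfolding weighted_sum_def[abs_def]
  by (subst Bochner_Integration.integral_sum) (auto simp: integrable_X expectation_X)

lemma expectation_weighted_sum_square:
  shows "integrable M (\<lambda>\<omega>. (weighted_sum c p \<omega>)\<^sup>2)"
    and "expectation (\<lambda>\<omega>. (weighted_sum c p \<omega>)\<^sup>2) = \<sigma> * (\<Sum>j=1..p. (c j)\<^sup>2)"
proof -
  have "integrable M (\<lambda>\<omega>. (\<Sum>j=1..p. c j * X j \<omega>)\<^sup>2)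
      \<and> expectation (\<lambda>\<omega>. (\<Sum>j=1..p. c j * X j \<omega>)\<^sup>2) = (\<Sum>j=1..p. expectation (\<lambda>\<omega>. (c j * X j \<omega>)\<^sup>2))"
    by (rule indep_sum_square_expectation[OF _ indep_weighted_terms])
       (auto simp: power_mult_distrib integrable_X_square expectation_X)
  then show "integrable M (\<lambda>\<omega>. (weighted_sum c p \<omega>)\<^sup>2)"
    and "expectation (\<lambda>\<omega>. (weighted_sum c p \<omega>)\<^sup>2) = \<sigma> * (\<Sum>j=1..p. (c j)\<^sup>2)"
    by (auto simp: weighted_sum_def power_mult_distrib expectation_X_square sum_distrib_left mult.commute)
qed

lemma tight_weighted_laws:
  assumes c: "\<And>n. (\<Sum>j=1..p n. (c n j)\<^sup>2) \<le> 1"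
  shows "tight (\<lambda>n. weighted_law (c n) (p n))"
  unfolding tight_def
proof (intro conjI allI impI real_distribution_weighted_law)
  fix \<epsilon> :: real assume \<epsilon>: "0 < \<epsilon>"
  define k where "k = sqrt (\<sigma> / \<epsilon>) + 1"
  have k: "0 < k" unfolding k_def using \<sigma>_pos \<epsilon> by (simp add: add_nonneg_pos)
  have "(sqrt (\<sigma> / \<epsilon>))\<^sup>2 < k\<^sup>2"
    unfolding k_def using \<sigma>_pos \<epsilon> by (intro power_strict_mono) auto
  then have \<sigma>k: "\<sigma> / k\<^sup>2 < \<epsilon>" using \<sigma>_pos \<epsilon> k by (simp add: field_simps)
  have "1 - \<epsilon> < measure (weighted_law (c n) (p n)) {- k<..k}" for n
  proof -
    let ?V = "weighted_sum (c n) (p n)"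
    have "prob {\<omega> \<in> space M. k \<le> \<bar>?V \<omega> - expectation ?V\<bar>} \<le> variance ?V / k\<^sup>2"
      by (rule Chebyshev_inequality[OF _ expectation_weighted_sum_square(1) k]) simp
    also have "variance ?V = \<sigma> * (\<Sum>j=1..p n. (c n j)\<^sup>2)"
      using expectation_weighted_sum expectation_weighted_sum_square(2) by simp
    also have "\<dots> / k\<^sup>2 \<le> \<sigma> / k\<^sup>2"
      using c[of n] \<sigma>_pos by (intro divide_right_mono mult_left_le) auto
    finally have "prob {\<omega> \<in> space M. k \<le> \<bar>?V \<omega>\<bar>} < \<epsilon>"
      using \<sigma>k by (simp add: expectation_weighted_sum)
    moreover have "prob {\<omega> \<in> space M. \<not> k \<le> \<bar>?V \<omega>\<bar>} = 1 - prob {\<omega> \<in> space M. k \<le> \<bar>?V \<omega>\<bar>}"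
      by (rule prob_neg) measurable
    moreover have "prob {\<omega> \<in> space M. \<not> k \<le> \<bar>?V \<omega>\<bar>} \<le> measure (weighted_law (c n) (p n)) {- k<..k}"
      unfolding weighted_law_def by (subst measure_distr) (auto intro!: finite_measure_mono)
    ultimately show ?thesis
      by linarith
  qed
  then show "\<exists>a b. a < b \<and> (\<forall>n. measure (weighted_law (c n) (p n)) {a<..b} > 1 - \<epsilon>)"
    using k by (intro exI[of _ "- k"] exI[of _ k]) auto
qed

lemma measure_weighted_law_interval_le:
  assumes p: "1 \<le> p" and c1: "0 < c 1" and law: "\<And>z. measure law {z<..z + w / c 1} \<le> \<beta>"
  shows "measure (weighted_law c p) {y<..y + w} \<le> \<beta>"
proof -
  define Y where "Y j \<omega> = c j * X j \<omega>" for j \<omega>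
  have "{1..p} = insert 1 {2..p}" using p by auto
  then have sum_eq: "weighted_sum c p \<omega> = Y 1 \<omega> + (\<Sum>j\<in>{2..p}. Y j \<omega>)" for \<omega>
    by (simp add: weighted_sum_def Y_def)
  have ind: "indep_var borel (Y 1) borel (\<lambda>\<omega>. \<Sum>j\<in>{2..p}. Y j \<omega>)"
    unfolding Y_def by (rule indep_vars_sum[OF _ _ indep_weighted_terms]) auto
  have "prob {\<omega> \<in> space M. Y 1 \<omega> + (\<Sum>j\<in>{2..p}. Y j \<omega>) \<in> {y<..y + w}} \<le> \<beta>"
  proof (rule indep_sum_interval_prob_le[OF ind])
    fix z
    have "{\<omega> \<in> space M. Y 1 \<omega> \<in> {z<..z + w}} = {\<omega> \<in> space M. X 1 \<omega> \<in> {z / c 1<..z / c 1 + w / c 1}}"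
      using c1 by (auto simp: Y_def field_simps)
    also have "prob \<dots> = measure law {z / c 1<..z / c 1 + w / c 1}"
      by (rule prob_X_in) simp
    finally show "prob {\<omega> \<in> space M. Y 1 \<omega> \<in> {z<..z + w}} \<le> \<beta>"
      using law by simp
  qed
  moreover have "measure (weighted_law c p) {y<..y + w} = prob {\<omega> \<in> space M. weighted_sum c p \<omega> \<in> {y<..y + w}}"
    unfolding weighted_law_def by (subst measure_distr) (auto intro!: arg_cong[where f = prob])
  ultimately show ?thesis by (simp add: sum_eq)
qed

lemma weak_conv_centred_normal:
  assumes c: "\<And>n. decreasing_unit_weights (p n) (c n)" and lim: "(\<lambda>n. c n 1) \<longlonglongrightarrow> 0"
  shows "weak_conv_m (\<lambda>n. weighted_law (c n) (p n)) (centred_normal \<sigma>)"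
proof (rule levy_continuity[OF real_distribution_weighted_law real_distribution_centred_normal])
  fix t
  let ?C = "expectation (\<lambda>\<omega>. \<bar>X 0 \<omega>\<bar> ^ 3) / 6"
  define g where "g n = ?C * \<bar>t\<bar> ^ 3 * c n 1 + \<sigma>\<^sup>2 * t ^ 4 * (c n 1)\<^sup>2 / 8" for n
  have "g \<longlonglongrightarrow> ?C * \<bar>t\<bar> ^ 3 * 0 + \<sigma>\<^sup>2 * t ^ 4 * 0\<^sup>2 / 8"
    unfolding g_def by (intro tendsto_intros lim) simp
  then have g: "g \<longlonglongrightarrow> 0" by simp
  have "norm (char (weighted_law (c n) (p n)) t - char (centred_normal \<sigma>) t) \<le> g n" for n
  proof -
    have "norm ((\<Prod>j=1..p n. \<psi> (c n j * t))
        - complex_of_real (exp (- (\<sigma> * t\<^sup>2 * (\<Sum>j=1..p n. (c n j)\<^sup>2)) / 2))) \<le> g n * (\<Sum>j=1..p n. (c n j)\<^sup>2)"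
      unfolding g_def using decreasing_unit_weights_nonneg[OF c] decreasing_unit_weights_antimono[OF c]
      by (intro norm_prod_sub_gaussian_le) auto
    then show ?thesis
      using \<sigma>_pos unfolding decreasing_unit_weights_sum_sq[OF c]
      by (simp add: char_weighted_law char_centred_normal)
  qed
  then have "(\<lambda>n. char (weighted_law (c n) (p n)) t - char (centred_normal \<sigma>) t) \<longlonglongrightarrow> 0"
    by (intro Lim_null_comparison[OF _ g] always_eventually) simp
  then show "(\<lambda>n. char (weighted_law (c n) (p n)) t) \<longlonglongrightarrow> char (centred_normal \<sigma>) t"
    by (rule LIM_zero_cancel)
qed

lemma weighted_law_small_intervals:
  assumes "0 < \<alpha>" "0 < \<epsilon>"
  obtains w where "0 < w"
    "\<And>p c y. decreasing_unit_weights p c \<Longrightarrow> \<alpha> \<le> c 1 \<Longrightarrow> measure (weighted_law c p) {y<..y + w} \<le> \<epsilon>"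
proof -
  interpret law: real_distribution law by (rule real_distribution_law)
  obtain w0 where "0 < w0" and w0: "\<And>z. measure law {z<..z + w0} < \<epsilon>"
    using law.atomless_imp_small_intervals[OF measure_law_singleton \<open>0 < \<epsilon>\<close>] by blast
  have "measure (weighted_law c p) {y<..y + \<alpha> * w0} \<le> \<epsilon>"
    if c: "decreasing_unit_weights p c" and "\<alpha> \<le> c 1" for p c y
  proof (rule measure_weighted_law_interval_le[OF decreasing_unit_weights_ge_1[OF c]])
    show c1: "0 < c 1" using \<open>0 < \<alpha>\<close> \<open>\<alpha> \<le> c 1\<close> by linarith
    fix z
    have "\<alpha> * w0 / c 1 \<le> w0"
      using \<open>\<alpha> \<le> c 1\<close> c1 \<open>0 < w0\<close> by (simp add: field_simps)
    then have "measure law {z<..z + \<alpha> * w0 / c 1} \<le> measure law {z<..z + w0}"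
      by (intro law.finite_measure_mono) auto
    with w0[of z] show "measure law {z<..z + \<alpha> * w0 / c 1} \<le> \<epsilon>" by simp
  qed
  with that[of "\<alpha> * w0"] \<open>0 < \<alpha>\<close> \<open>0 < w0\<close> show ?thesis by simp
qed

lemma measure_singleton_weak_limit:
  assumes c: "\<And>n. decreasing_unit_weights (p n) (c n)" and lim: "(\<lambda>n. c n 1) \<longlonglongrightarrow> \<alpha>" and "0 < \<alpha>"
    and \<nu>: "real_distribution \<nu>" and conv: "weak_conv_m (\<lambda>n. weighted_law (c n) (p n)) \<nu>"
  shows "measure \<nu> {x} = 0"
proof (rule weak_limit_atomless[OF real_distribution_weighted_law \<nu> conv])
  fix \<epsilon> :: real assume "0 < \<epsilon>"
  obtain w where "0 < w"
    and w: "\<And>p c y. decreasing_unit_weights p c \<Longrightarrow> \<alpha> / 2 \<le> c 1 \<Longrightarrow> measure (weighted_law c p) {y<..y + w} \<le> \<epsilon>"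
    using weighted_law_small_intervals[of "\<alpha> / 2" \<epsilon>] \<open>0 < \<alpha>\<close> \<open>0 < \<epsilon>\<close> by auto
  have "eventually (\<lambda>n. \<alpha> / 2 < c n 1) sequentially"
    using order_tendstoD(1)[OF lim, of "\<alpha> / 2"] \<open>0 < \<alpha>\<close> by simp
  then have "eventually (\<lambda>n. \<forall>y. measure (weighted_law (c n) (p n)) {y<..y + w} \<le> \<epsilon>) sequentially"
    by eventually_elim (use w c in \<open>auto intro: less_imp_le\<close>)
  with \<open>0 < w\<close> show "\<exists>w>0. eventually (\<lambda>n. \<forall>y. measure (weighted_law (c n) (p n)) {y<..y + w} \<le> \<epsilon>) sequentially"
    by blast
qed

end

context centred_iid
begin

lemma weak_limits_eq:
  assumes a: "\<And>p. 1 \<le> p \<Longrightarrow> decreasing_unit_weights p (a p)"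
    and b: "\<And>p. 1 \<le> p \<Longrightarrow> decreasing_unit_weights p (b p)"
    and close: "(\<lambda>p. Max ((\<lambda>j. \<bar>a p j - b p j\<bar>) ` {1..p})) \<longlonglongrightarrow> 0"
    and s: "strict_mono s" and \<nu>a: "real_distribution \<nu>a" and \<nu>b: "real_distribution \<nu>b"
    and conv_a: "weak_conv_m (\<lambda>n. weighted_law (a (s n)) (s n)) \<nu>a"
    and conv_b: "weak_conv_m (\<lambda>n. weighted_law (b (s n)) (s n)) \<nu>b"
  shows "\<nu>a = \<nu>b"
proof (rule Levy_uniqueness[OF \<nu>a \<nu>b], rule ext)
  fix t
  have "(\<lambda>n. char (weighted_law (a (s n)) (s n)) t - char (weighted_law (b (s n)) (s n)) t) \<longlonglongrightarrow> 0"
    using LIMSEQ_subseq_LIMSEQ[OF prod_weights_diff_tendsto_0[OF a b close] s]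
    by (simp add: comp_def char_weighted_law)
  moreover have "(\<lambda>n. char (weighted_law (a (s n)) (s n)) t - char (weighted_law (b (s n)) (s n)) t)
      \<longlonglongrightarrow> char \<nu>a t - char \<nu>b t"
    by (intro tendsto_diff levy_continuity1 real_distribution_weighted_law \<nu>a \<nu>b conv_a conv_b)
  ultimately show "char \<nu>a t = char \<nu>b t"
    using LIMSEQ_unique by fastforce
qed

lemma weak_limits_along_subsequence:
  assumes a: "\<And>p. 1 \<le> p \<Longrightarrow> decreasing_unit_weights p (a p)"
    and b: "\<And>p. 1 \<le> p \<Longrightarrow> decreasing_unit_weights p (b p)" and q: "strict_mono (q :: nat \<Rightarrow> nat)"
  obtains r \<nu>a \<nu>b where "strict_mono r" "real_distribution \<nu>a" "real_distribution \<nu>b"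
    "weak_conv_m (\<lambda>n. weighted_law (a (q (r n))) (q (r n))) \<nu>a"
    "weak_conv_m (\<lambda>n. weighted_law (b (q (r n))) (q (r n))) \<nu>b"
proof -
  have "(\<Sum>j=1..p. (c p j)\<^sup>2) \<le> 1" if "\<And>p. 1 \<le> p \<Longrightarrow> decreasing_unit_weights p (c p)" for c p
    using that[of p] decreasing_unit_weights_sum_sq by (cases "p = 0") auto
  then have tight: "tight (\<lambda>p. weighted_law (a p) p)" "tight (\<lambda>p. weighted_law (b p) p)"
    using tight_weighted_laws[where p = "\<lambda>p. p" and c = a] tight_weighted_laws[where p = "\<lambda>p. p" and c = b] a b
    by blast+
  obtain r \<nu>a where r: "strict_mono r" and \<nu>a: "real_distribution \<nu>a"
    and conv_a: "weak_conv_m ((\<lambda>p. weighted_law (a p) p) \<circ> q \<circ> r) \<nu>a"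
    using tight_imp_convergent_subsubsequence[OF tight(1) q] by blast
  obtain r' \<nu>b where r': "strict_mono r'" and \<nu>b: "real_distribution \<nu>b"
    and conv_b: "weak_conv_m ((\<lambda>p. weighted_law (b p) p) \<circ> (q \<circ> r) \<circ> r') \<nu>b"
    using tight_imp_convergent_subsubsequence[OF tight(2) strict_mono_o[OF q r]] by blast
  have "weak_conv_m (\<lambda>n. weighted_law (a (q (r (r' n)))) (q (r (r' n)))) \<nu>a"
    using conv_a r' unfolding weak_conv_m_def weak_conv_def
    by (auto intro: LIMSEQ_subseq_LIMSEQ[where f = r', unfolded comp_def])
  moreover have "weak_conv_m (\<lambda>n. weighted_law (b (q (r (r' n)))) (q (r (r' n)))) \<nu>b"
    using conv_b by (simp add: comp_def)
  ultimately show ?thesis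
    using \<nu>a \<nu>b by (intro that[of "r \<circ> r'"]) (auto intro: strict_mono_o r r')
qed

lemma common_atomless_weak_limit:
  assumes a: "\<And>p. 1 \<le> p \<Longrightarrow> decreasing_unit_weights p (a p)"
    and b: "\<And>p. 1 \<le> p \<Longrightarrow> decreasing_unit_weights p (b p)"
    and close: "(\<lambda>p. Max ((\<lambda>j. \<bar>a p j - b p j\<bar>) ` {1..p})) \<longlonglongrightarrow> 0"
    and q: "strict_mono q" "\<And>n. 1 \<le> q n" and lim: "(\<lambda>n. a (q n) 1) \<longlonglongrightarrow> \<alpha>"
  obtains r \<nu> where "strict_mono r" "real_distribution \<nu>" "\<And>x. measure \<nu> {x} = 0"
    "weak_conv_m (\<lambda>n. weighted_law (a (q (r n))) (q (r n))) \<nu>"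
    "weak_conv_m (\<lambda>n. weighted_law (b (q (r n))) (q (r n))) \<nu>"
proof (cases "\<alpha> = 0")
  case True
  have close_q: "(\<lambda>n. Max ((\<lambda>j. \<bar>a (q n) j - b (q n) j\<bar>) ` {1..q n})) \<longlonglongrightarrow> 0"
    using LIMSEQ_subseq_LIMSEQ[OF close q(1)] by (simp add: comp_def)
  have "norm (a (q n) 1 - b (q n) 1) \<le> Max ((\<lambda>j. \<bar>a (q n) j - b (q n) j\<bar>) ` {1..q n})" for n
    using q(2)[of n] by simp
  then have "(\<lambda>n. a (q n) 1 - b (q n) 1) \<longlonglongrightarrow> 0"
    by (intro Lim_null_comparison[OF always_eventually close_q]) blast
  from tendsto_diff[OF lim this] True have "(\<lambda>n. b (q n) 1) \<longlonglongrightarrow> 0"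
    by simp
  with lim True a b q(2) show ?thesis
    using weak_conv_centred_normal[of q "\<lambda>n. a (q n)"] weak_conv_centred_normal[of q "\<lambda>n. b (q n)"]
      real_distribution_centred_normal measure_centred_normal_singleton[OF \<sigma>_pos]
    by (intro that[of id]) (auto simp: strict_mono_def)
next
  case False
  have "0 \<le> \<alpha>"
    using decreasing_unit_weights_nonneg[OF a] q(2)
    by (intro tendsto_lowerbound[OF lim] always_eventually) auto
  with False have "0 < \<alpha>" by simp
  obtain r \<nu>a \<nu>b where r: "strict_mono r" and \<nu>: "real_distribution \<nu>a" "real_distribution \<nu>b"
    and conv: "weak_conv_m (\<lambda>n. weighted_law (a (q (r n))) (q (r n))) \<nu>a"
      "weak_conv_m (\<lambda>n. weighted_law (b (q (r n))) (q (r n))) \<nu>b"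
    using weak_limits_along_subsequence[OF a b q(1)] by blast
  have "(\<lambda>n. a (q (r n)) 1) \<longlonglongrightarrow> \<alpha>"
    using LIMSEQ_subseq_LIMSEQ[OF lim r] by (simp add: comp_def)
  then have "measure \<nu>a {x} = 0" for x
    using q(2) a by (intro measure_singleton_weak_limit[OF _ _ \<open>0 < \<alpha>\<close> \<nu>(1) conv(1)]) auto
  moreover have "\<nu>a = \<nu>b"
    by (rule weak_limits_eq[OF a b close strict_mono_o[OF q(1) r] \<nu>]) (use conv in \<open>simp_all add: comp_def\<close>)
  ultimately show ?thesis
    using that[OF r \<nu>(1)] conv by simp
qed

theorem kolmogorov_dist_weighted_laws_tendsto_0:
  assumes a: "\<And>p. 1 \<le> p \<Longrightarrow> decreasing_unit_weights p (a p)"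
    and b: "\<And>p. 1 \<le> p \<Longrightarrow> decreasing_unit_weights p (b p)"
    and close: "(\<lambda>p. Max ((\<lambda>j. \<bar>a p j - b p j\<bar>) ` {1..p})) \<longlonglongrightarrow> 0"
  shows "(\<lambda>p. kolmogorov_dist (weighted_law (a p) p) (weighted_law (b p) p)) \<longlonglongrightarrow> 0"
proof (rule subsubsequences_tendsto_imp_tendsto)
  fix s :: "nat \<Rightarrow> nat" assume "strict_mono s"
  \<comment> \<open>Shifting by one makes all indices positive, where the weights are unit vectors.\<close>
  define q where "q n = s (Suc n)" for n
  have q: "strict_mono q" "1 \<le> q n" for n
    using \<open>strict_mono s\<close> seq_suble[OF \<open>strict_mono s\<close>, of "Suc n"]
    by (auto simp: q_def strict_mono_def)
  have "bounded (range (\<lambda>n. a (q n) 1))"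
    using decreasing_unit_weights_nonneg[OF a] decreasing_unit_weights_le_1[OF a] q(2)
    by (intro boundedI[where B = 1]) auto
  then obtain r1 \<alpha> where r1: "strict_mono r1" and "((\<lambda>n. a (q n) 1) \<circ> r1) \<longlonglongrightarrow> \<alpha>"
    using bounded_imp_convergent_subsequence by blast
  then obtain r \<nu> where "strict_mono r" "real_distribution \<nu>" "\<And>x. measure \<nu> {x} = 0"
    "weak_conv_m (\<lambda>n. weighted_law (a (q (r1 (r n)))) (q (r1 (r n)))) \<nu>"
    "weak_conv_m (\<lambda>n. weighted_law (b (q (r1 (r n)))) (q (r1 (r n)))) \<nu>"
    using common_atomless_weak_limit[OF a b close strict_mono_o[OF q(1) r1], of \<alpha>] q(2)
    by (auto simp: comp_def)
  then have "(\<lambda>n. kolmogorov_dist (weighted_law (a (q (r1 (r n)))) (q (r1 (r n))))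
      (weighted_law (b (q (r1 (r n)))) (q (r1 (r n))))) \<longlonglongrightarrow> 0"
    by (intro kolmogorov_dist_tendsto_0 real_distribution_weighted_law)
  then show "\<exists>r. strict_mono r \<and>
      (\<lambda>n. kolmogorov_dist (weighted_law (a (s (r n))) (s (r n))) (weighted_law (b (s (r n))) (s (r n))))
      \<longlonglongrightarrow> 0"
    using \<open>strict_mono r\<close> r1
    by (intro exI[of _ "\<lambda>n. Suc (r1 (r n))"]) (auto simp: q_def strict_mono_def)
qed

end

section \<open>The chi-squared distribution with one degree of freedom\<close>

definition chi2_1_pdf :: "real \<Rightarrow> real" where
  "chi2_1_pdf x = (if 0 < x then exp (- x / 2) / sqrt (2 * pi * x) else 0)"

lemma chi2_1_pdf_nonneg: "0 \<le> chi2_1_pdf x"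
  by (simp add: chi2_1_pdf_def)

lemma chi2_1_pdf_measurable[measurable]: "chi2_1_pdf \<in> borel_measurable borel"
  unfolding chi2_1_pdf_def by measurable

lemma chi2_1_density_eq: "chi2_1_density = (\<lambda>x. ennreal (chi2_1_pdf x))"
  by (auto simp: chi2_1_density_def chi2_1_pdf_def fun_eq_iff)

lemma nn_integral_Gamma:
  assumes "0 < s"
  shows "(\<integral>\<^sup>+t. ennreal (if 0 \<le> t then t powr (s - 1) / exp t else 0) \<partial>lborel) = ennreal (Gamma s)"
proof -
  have "(\<integral>\<^sup>+t. ennreal (t powr (s - 1) / exp t) * indicator {0..} t \<partial>lborel) = ennreal (Gamma s)"
    by (rule nn_integral_has_integral_lebesgue'[OF _ Gamma_integral_real[OF assms]]) auto
  then show ?thesis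
    by (subst (asm) nn_integral_cong[where v = "\<lambda>t. ennreal (if 0 \<le> t then t powr (s - 1) / exp t else 0)"])
       (auto split: split_indicator)
qed

text \<open>Substituting \<open>x = 2 t\<close> turns the \<open>k\<close>-th moment into \<open>\<Gamma>(k + 1/2)\<close>.\<close>

lemma nn_integral_chi2_1_pdf_power:
  "(\<integral>\<^sup>+x. ennreal (chi2_1_pdf x * x ^ k) \<partial>lborel)
     = ennreal (2 powr (real k - 1/2) / sqrt (2 * pi) * 2 * Gamma (real k + 1/2))"
proof -
  define s where "s = real k + 1/2"
  define G where "G t = (if 0 \<le> t then t powr (s - 1) / exp t else 0)" for t
  define K where "K = 2 powr (real k - 1/2) / sqrt (2 * pi)"
  have [measurable]: "G \<in> borel_measurable borel" unfolding G_def by measurable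
  have K: "0 \<le> K" unfolding K_def by simp
  have G: "0 \<le> G t" for t unfolding G_def by simp
  have eq: "chi2_1_pdf x * x ^ k = K * G (x / 2)" for x
  proof (cases "0 < x")
    case True
    have "G (x / 2) = (x / 2) powr (real k - 1/2) / exp (x / 2)"
      using True by (simp add: G_def s_def)
    also have "(x / 2) powr (real k - 1/2) = x ^ k / sqrt x / 2 powr (real k - 1/2)"
      using True by (simp add: powr_divide powr_diff powr_realpow powr_half_sqrt)
    finally show ?thesis
      using True by (simp add: chi2_1_pdf_def K_def real_sqrt_mult exp_minus field_simps)
  qed (auto simp: chi2_1_pdf_def G_def)
  have "(\<integral>\<^sup>+x. ennreal (chi2_1_pdf x * x ^ k) \<partial>lborel) = ennreal K * (\<integral>\<^sup>+x. ennreal (G (x / 2)) \<partial>lborel)"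
    by (simp add: eq ennreal_mult K G nn_integral_cmult)
  also have "(\<integral>\<^sup>+x. ennreal (G (x / 2)) \<partial>lborel) = ennreal 2 * (\<integral>\<^sup>+x. ennreal (G ((0 + 2 * x) / 2)) \<partial>lborel)"
    using nn_integral_real_affine[of "\<lambda>x. ennreal (G (x / 2))" 2 0] by simp
  also have "(\<integral>\<^sup>+x. ennreal (G ((0 + 2 * x) / 2)) \<partial>lborel) = ennreal (Gamma s)"
    using nn_integral_Gamma[of s] by (simp add: G_def s_def)
  also have "ennreal K * (ennreal 2 * ennreal (Gamma s)) = ennreal (K * 2 * Gamma s)"
    using K Gamma_real_pos[of s] by (simp add: s_def ennreal_mult mult.assoc)
  finally show ?thesis
    by (simp add: K_def s_def)
qed

lemma nn_integral_chi2_1_pdf_mean: "(\<integral>\<^sup>+x. ennreal (chi2_1_pdf x * x) \<partial>lborel) = 1"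
proof -
  have "(1/2 :: real) \<notin> \<int>\<^sub>\<le>\<^sub>0"
    using nonpos_Ints_nonpos by fastforce
  then have "Gamma (1 + 1/2 :: real) = sqrt pi / 2"
    using Gamma_plus1[of "1/2 :: real"] Gamma_one_half_real by simp
  moreover have "(2::real) powr (1 - 1/2) = sqrt 2"
    by (simp add: powr_half_sqrt)
  ultimately show ?thesis
    using nn_integral_chi2_1_pdf_power[of 1] by (simp add: real_sqrt_mult)
qed

context prob_space
begin

lemma chi2_1_moments:
  assumes Y: "distributed M lborel Y chi2_1_density"
  shows "integrable M (\<lambda>\<omega>. Y \<omega> ^ k)" and "expectation Y = 1"
proof -
  have Y': "distributed M lborel Y (\<lambda>x. ennreal (chi2_1_pdf x))"
    using Y by (simp add: chi2_1_density_eq)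
  have "integrable lborel (\<lambda>x. chi2_1_pdf x * x ^ k)"
  proof (rule integrableI_bounded)
    have "\<bar>chi2_1_pdf x * x ^ k\<bar> = chi2_1_pdf x * x ^ k" for x
      by (simp add: chi2_1_pdf_def)
    then show "(\<integral>\<^sup>+x. ennreal (norm (chi2_1_pdf x * x ^ k)) \<partial>lborel) < \<infinity>"
      by (simp add: nn_integral_chi2_1_pdf_power)
  qed measurable
  then show "integrable M (\<lambda>\<omega>. Y \<omega> ^ k)"
    using distributed_integrable[OF Y', of "\<lambda>x. x ^ k"] chi2_1_pdf_nonneg by simp
  have "expectation Y = (\<integral>x. chi2_1_pdf x * x \<partial>lborel)"
    using distributed_integral[OF Y', of "\<lambda>x. x"] chi2_1_pdf_nonneg by simp
  also have "\<dots> = enn2real (\<integral>\<^sup>+x. ennreal (chi2_1_pdf x * x) \<partial>lborel)"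
    by (rule integral_eq_nn_integral) (auto simp: chi2_1_pdf_def)
  finally show "expectation Y = 1"
    by (simp add: nn_integral_chi2_1_pdf_mean)
qed

lemma chi2_1_prob_singleton:
  assumes Y: "distributed M lborel Y chi2_1_density"
  shows "prob {\<omega> \<in> space M. Y \<omega> = x} = 0"
proof -
  have "emeasure M (Y -` {x} \<inter> space M) = (\<integral>\<^sup>+y. chi2_1_density y * indicator {x} y \<partial>lborel)"
    by (rule distributed_emeasure[OF Y]) simp
  also have "\<dots> = (\<integral>\<^sup>+y. chi2_1_density x * indicator {x} y \<partial>lborel)"
    by (intro nn_integral_cong) (simp split: split_indicator)
  also have "\<dots> = 0"
    by (simp add: nn_integral_cmult_indicator)
  finally show ?thesis
    by (simp add: measure_def vimage_def Int_def conj_commute)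
qed

end


lemma centred_iid_chi2_1:
  assumes M: "prob_space M" and indep: "prob_space.indep_vars M (\<lambda>_. borel) \<eta> UNIV"
    and chi2: "\<And>j. distributed M lborel (\<eta> j) chi2_1_density"
  shows "centred_iid M (\<lambda>j \<omega>. \<eta> j \<omega> - 1)"
proof -
  interpret prob_space M by (rule M)
  have [measurable]: "random_variable borel (\<eta> j)" for j
    using indep unfolding indep_vars_def by auto
  have law: "distr M borel (\<lambda>\<omega>. \<eta> j \<omega> - 1) = distr (density lborel chi2_1_density) borel (\<lambda>x. x - 1)" for j
  proof -
    have "distr M borel (\<lambda>\<omega>. \<eta> j \<omega> - 1) = distr (distr M lborel (\<eta> j)) borel (\<lambda>x. x - 1)"
      by (subst distr_distr) (auto simp: comp_def)
    then show ?thesis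
      using chi2[of j] by (simp add: distributed_def)
  qed
  have "integrable M (\<lambda>\<omega>. \<eta> 0 \<omega> ^ 3 - 3 * \<eta> 0 \<omega> ^ 2 + 3 * \<eta> 0 \<omega> - 1)"
    using chi2_1_moments(1)[OF chi2, of 0] chi2_1_moments(1)[OF chi2, of 0 1]
    by (intro Bochner_Integration.integrable_diff Bochner_Integration.integrable_add integrable_mult_right) auto
  then have "integrable M (\<lambda>\<omega>. \<bar>(\<eta> 0 \<omega> - 1) ^ 3\<bar>)"
    by (intro integrable_abs) (simp add: power3_eq_cube power2_eq_square algebra_simps)
  then have cube: "integrable M (\<lambda>\<omega>. \<bar>\<eta> 0 \<omega> - 1\<bar> ^ 3)"
    by (simp add: power_abs)
  show ?thesis
  proof
    show "indep_vars (\<lambda>_. borel) (\<lambda>j \<omega>. \<eta> j \<omega> - 1) UNIV"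
      by (rule indep_vars_compose2[OF indep, where Y = "\<lambda>_ x. x - 1"]) simp
    show "expectation (\<lambda>\<omega>. \<eta> 0 \<omega> - 1) = 0"
      using chi2_1_moments(1)[OF chi2, of 0 1] chi2_1_moments(2)[OF chi2, of 0] by (simp add: prob_space)
    show "prob {\<omega> \<in> space M. \<eta> 0 \<omega> - 1 = x} = 0" for x
      using chi2_1_prob_singleton[OF chi2, of 0 "x + 1"] by (simp add: algebra_simps)
  qed (simp_all add: law cube)
qed

theorem mainTheorem4:
  fixes M :: "'s measure"
    and a b :: "nat \<Rightarrow> nat \<Rightarrow> real"
    and \<eta> :: "nat \<Rightarrow> 's \<Rightarrow> real"
  assumes M: "prob_space M"
    and indep: "prob_space.indep_vars M (\<lambda>_. borel) \<eta> UNIV"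
    and chi2: "\<And>j. distributed M lborel (\<eta> j) chi2_1_density"
    and a_mono: "\<And>p j. 1 \<le> j \<Longrightarrow> j < p \<Longrightarrow> a p (Suc j) \<le> a p j"
    and a_nonneg: "\<And>p. p \<ge> 1 \<Longrightarrow> a p p \<ge> 0"
    and b_mono: "\<And>p j. 1 \<le> j \<Longrightarrow> j < p \<Longrightarrow> b p (Suc j) \<le> b p j"
    and b_nonneg: "\<And>p. p \<ge> 1 \<Longrightarrow> b p p \<ge> 0"
    and a_norm: "\<And>p. p \<ge> 1 \<Longrightarrow> (\<Sum>j=1..p. (a p j)\<^sup>2) = 1"
    and b_norm: "\<And>p. p \<ge> 1 \<Longrightarrow> (\<Sum>j=1..p. (b p j)\<^sup>2) = 1"
    and close: "(\<lambda>p. Max ((\<lambda>j. \<bar>a p j - b p j\<bar>) ` {1..p})) \<longlonglongrightarrow> 0"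
  shows "(\<lambda>p. SUP x::real. \<bar>measure M {\<omega> \<in> space M. (\<Sum>j=1..p. a p j * (\<eta> j \<omega> - 1)) \<le> x}
                          - measure M {\<omega> \<in> space M. (\<Sum>j=1..p. b p j * (\<eta> j \<omega> - 1)) \<le> x}\<bar>)
         \<longlonglongrightarrow> 0"
proof -
  interpret centred_iid M "\<lambda>j \<omega>. \<eta> j \<omega> - 1"
    by (rule centred_iid_chi2_1[OF M indep chi2])
  have "decreasing_unit_weights p (a p)" "decreasing_unit_weights p (b p)" if "1 \<le> p" for p
    using that a_mono a_nonneg a_norm b_mono b_nonneg b_norm by (auto simp: decreasing_unit_weights_def)
  from kolmogorov_dist_weighted_laws_tendsto_0[OF this close]
  show ?thesis
    unfolding kolmogorov_dist_def cdf_weighted_law weighted_sum_def .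
qed

end
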